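(* Let $G$ be a finite simple graph and $e\in E(G)$. Then \[\tau_G=\tau_{G\setminus e}-(x-1)\,\tau_{G/e},\] where $G\setminus e$ is $G$ with $e$ deleted and $G/e$ is the (simple, unweighted) graph obtained by contracting $e$, removing any loops and multiple edges.
   Context: $X_G=\sum_\kappa\prod_v x_{\kappa(v)}$ over proper colourings $\kappa:V(G)\to\{1,2,\dots\}$. $P_\lambda$ is the disjoint union of paths with $\lambda_1,\dots,\lambda_{\ell(\lambda)}$ vertices; $\{X_{P_\lambda}\}$ is a basis of the symmetric functions over $\mathbb{Q}$. The tree polynomial is $\tau_G(x)=\sum_\lambda a_\lambda x^{\ell(\lambda)}$ where $X_G=\sum_\lambda a_\lambda X_{P_\lambda}$. *)

theory Defs
  imports Main "HOL-Computational_Algebra.Polynomial"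
begin

definition simple_graph :: "'a set \<Rightarrow> 'a set set \<Rightarrow> bool" where
  "simple_graph V E \<longleftrightarrow> finite V \<and> (\<forall>e\<in>E. e \<subseteq> V \<and> card e = 2)"

definition proper_colourings :: "'a set \<Rightarrow> 'a set set \<Rightarrow> ('a \<Rightarrow> nat) set" where
  "proper_colourings V E =
     {\<kappa>. (\<forall>x\<in>V. 1 \<le> \<kappa> x) \<and> (\<forall>x. x \<notin> V \<longrightarrow> \<kappa> x = 0) \<and>
          (\<forall>e\<in>E. \<forall>x\<in>e. \<forall>y\<in>e. x \<noteq> y \<longrightarrow> \<kappa> x \<noteq> \<kappa> y)}"

text \<open>Chromatic symmetric function X_G, as a formal power series in the variables
x_1, x_2, ...: the coefficient of the monomial prod_i x_i^(alpha i) is the number of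
proper colourings with exactly alpha i vertices of colour i.  (There is no variable
x_0, so monomials with alpha 0 > 0 get coefficient 0.)\<close>

definition csf :: "'a set \<Rightarrow> 'a set set \<Rightarrow> (nat \<Rightarrow> nat) \<Rightarrow> rat" where
  "csf V E \<alpha> = of_nat (card {\<kappa> \<in> proper_colourings V E.
                          \<forall>i. card {x\<in>V. \<kappa> x = i} = \<alpha> i})"

definition partitions :: "nat \<Rightarrow> nat list set" where
  "partitions n = {p. sorted_wrt (\<ge>) p \<and> 0 \<notin> set p \<and> sum_list p = n}"

text \<open>P_lambda: disjoint union of paths with lambda_1, ..., lambda_l vertices, laid out
consecutively on vertices 0, ..., |lambda|-1; the block boundaries are the partial sums.\<close>

definition path_V :: "nat list \<Rightarrow> nat set" where
  "path_V p = {0..<sum_list p}"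

definition path_E :: "nat list \<Rightarrow> nat set set" where
  "path_E p = {{i, Suc i} | i. Suc i < sum_list p \<and>
                   Suc i \<notin> {sum_list (take k p) | k. k \<le> length p}}"

text \<open>The coefficients a_lambda of X_G in the basis {X_{P_lambda}}; since X_G is homogeneous
of degree |V(G)|, only partitions of |V(G)| occur.\<close>

definition path_coeffs :: "'a set \<Rightarrow> 'a set set \<Rightarrow> nat list \<Rightarrow> rat" where
  "path_coeffs V E = (THE a. (\<forall>\<mu>. \<mu> \<notin> partitions (card V) \<longrightarrow> a \<mu> = 0) \<and>
      (\<forall>\<alpha>. csf V E \<alpha> = (\<Sum>p\<in>partitions (card V). a p * csf (path_V p) (path_E p) \<alpha>)))"

definition tree_poly :: "'a set \<Rightarrow> 'a set set \<Rightarrow> rat poly" where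
  "tree_poly V E = (\<Sum>p\<in>partitions (card V). monom (path_coeffs V E p) (length p))"

text \<open>Contraction of the edge {u,v}: v is identified with u; loops and multiple edges
disappear (edges are sets, and images of size < 2 are dropped).\<close>

definition contract_edges :: "'a set set \<Rightarrow> 'a \<Rightarrow> 'a \<Rightarrow> 'a set set" where
  "contract_edges E u v =
     {(\<lambda>x. if x = v then u else x) ` e' | e'. e' \<in> E \<and>
        card ((\<lambda>x. if x = v then u else x) ` e') = 2}"

end

theory Submission
  imports Defs "HOL-Combinatorics.Permutations" "HOL-Library.FuncSet"
begin

text \<open>
  Specialising the colours to \<open>{1, \<dots>, m}\<close> turns \<open>X\<^sub>G = \<Sum> a\<^sub>\<lambda> X\<^bsub>P\<^sub>\<lambda>\<^esub>\<close> into
  \<open>\<chi>\<^sub>G(m) = \<Sum> a\<^sub>\<lambda> m\<^bsup>\<ell>(\<lambda>)\<^esup> (m - 1)\<^bsup>n - \<ell>(\<lambda>)\<^esup>\<close>, since a forest of paths with \<open>\<ell>\<close>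
  components on \<open>n = |V|\<close> vertices has exactly that many proper \<open>m\<close>-colourings. Hence
  \<open>\<tau>\<^sub>G(x) = (x - 1)\<^sup>n \<chi>\<^sub>G(x / (x - 1))\<close>, and the recurrence is the deletion--contraction
  recurrence \<open>\<chi>\<^sub>G = \<chi>\<^bsub>G\<setminus>e\<^esub> - \<chi>\<^bsub>G/e\<^esub>\<close> transported through this substitution.
  The coefficients \<open>a\<^sub>\<lambda>\<close> exist and are unique because the \<open>X\<^bsub>P\<^sub>\<lambda>\<^esub>\<close> are triangular
  with respect to the power sums: inclusion--exclusion over monochromatic edges gives
  \<open>X\<^bsub>P\<^sub>\<lambda>\<^esub> = \<plusminus>p\<^sub>\<lambda> + (terms p\<^sub>\<mu> with \<ell>(\<mu>) > \<ell>(\<lambda>))\<close>, and the \<open>p\<^sub>\<mu>\<close> are linearly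
  independent.
\<close>

section \<open>Power sums as counts of colourings\<close>

definition typed_colourings :: "'a set \<Rightarrow> (nat\<Rightarrow>nat) \<Rightarrow> ('a\<Rightarrow>nat) set" where
 "typed_colourings V \<alpha> = {\<kappa>. (\<forall>x\<in>V. 1 \<le> \<kappa> x) \<and> (\<forall>x. x \<notin> V \<longrightarrow> \<kappa> x = 0) \<and> (\<forall>i. card {x\<in>V. \<kappa> x = i} = \<alpha> i)}"

text \<open>\<open>power_sum c \<alpha>\<close> is the coefficient of \<open>x\<^sup>\<alpha>\<close> in \<open>p\<^bsub>c\<^sub>1\<^esub> p\<^bsub>c\<^sub>2\<^esub> \<cdots>\<close>: the function
  \<open>f\<close> picks the colour \<open>f j\<close> from the \<open>j\<close>-th factor.\<close>

definition power_sum_fns :: "nat list \<Rightarrow> (nat\<Rightarrow>nat) \<Rightarrow> (nat\<Rightarrow>nat) set" where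
 "power_sum_fns c \<alpha> = {f. (\<forall>j<length c. 1 \<le> f j) \<and> (\<forall>j. length c \<le> j \<longrightarrow> f j = 0) \<and>
     (\<forall>i. (\<Sum>j\<in>{j. j<length c \<and> f j = i}. c!j) = \<alpha> i)}"

definition power_sum :: "nat list \<Rightarrow> (nat\<Rightarrow>nat) \<Rightarrow> nat" where
 "power_sum c \<alpha> = card (power_sum_fns c \<alpha>)"

lemma card_eq_sum_card_fibres:
  assumes "finite T" "finite A" "f ` T \<subseteq> A"
  shows "card T = (\<Sum>a\<in>A. card {t\<in>T. f t = a})"
proof -
  have "(\<Sum>a\<in>A. sum (\<lambda>_. 1::nat) {t\<in>T. f t = a}) = sum (\<lambda>_. 1) T" by (rule sum.group[OF assms])
  then show ?thesis by simp
qed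

definition fibre_sizes :: "'a set \<Rightarrow> ('a \<Rightarrow> nat) \<Rightarrow> nat \<Rightarrow> nat list" where
  "fibre_sizes V b r = map (\<lambda>j. card {x\<in>V. b x = j}) [0..<r]"

definition block_lift :: "'a set \<Rightarrow> ('a \<Rightarrow> nat) \<Rightarrow> (nat \<Rightarrow> nat) \<Rightarrow> 'a \<Rightarrow> nat" where
  "block_lift V b f x = (if x \<in> V then f (b x) else 0)"

context
  fixes V :: "'a set" and b :: "'a \<Rightarrow> nat" and r :: nat
  assumes fin: "finite V" and bV: "b ` V = {0..<r}"
begin

lemma fibre_nonempty: "j < r \<Longrightarrow> \<exists>x\<in>V. b x = j"
  using bV by (metis atLeastLessThan_iff imageE le0)

lemma index_less_bound: "x \<in> V \<Longrightarrow> b x < r"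
  using bV by (metis atLeastLessThan_iff imageI)

lemma fibre_sizes_props:
  shows "length (fibre_sizes V b r) = r" "0 \<notin> set (fibre_sizes V b r)"
    "sum_list (fibre_sizes V b r) = card V"
proof -
  show "length (fibre_sizes V b r) = r" by (simp add: fibre_sizes_def)
  have nz: "card {x\<in>V. b x = j} \<noteq> 0" if "j < r" for j
    using fibre_nonempty[OF that] fin by (auto simp: card_eq_0_iff)
  then show "0 \<notin> set (fibre_sizes V b r)" by (fastforce simp: fibre_sizes_def)
  have "sum_list (fibre_sizes V b r) = (\<Sum>j\<in>{0..<r}. card {x\<in>V. b x = j})"
    by (simp add: fibre_sizes_def sum_set_upt_conv_sum_list_nat[symmetric])
  also have "\<dots> = card V" by (rule card_eq_sum_card_fibres[symmetric]) (use fin bV in auto)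
  finally show "sum_list (fibre_sizes V b r) = card V" .
qed

lemma card_block_lift_fibre:
  "card {x\<in>V. block_lift V b f x = i} = (\<Sum>j\<in>{j. j < r \<and> f j = i}. fibre_sizes V b r ! j)"
proof -
  let ?J = "{j. j < r \<and> f j = i}"
  have J: "finite ?J" by (rule finite_subset[of _ "{..<r}"]) auto
  have "card {x\<in>V. block_lift V b f x = i} = (\<Sum>j\<in>?J. card {x\<in>{x\<in>V. block_lift V b f x = i}. b x = j})"
    by (rule card_eq_sum_card_fibres) (use fin J bV in \<open>auto simp: block_lift_def\<close>)
  also have "\<dots> = (\<Sum>j\<in>?J. fibre_sizes V b r ! j)"
  proof (rule sum.cong[OF refl])
    fix j assume "j \<in> ?J"
    then have "{x\<in>{x\<in>V. block_lift V b f x = i}. b x = j} = {x\<in>V. b x = j}"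
      by (auto simp: block_lift_def)
    then show "card {x\<in>{x\<in>V. block_lift V b f x = i}. b x = j} = fibre_sizes V b r ! j"
      using \<open>j \<in> ?J\<close> by (simp add: fibre_sizes_def)
  qed
  finally show ?thesis .
qed

lemma block_lift_pos_iff: "(\<forall>x\<in>V. 1 \<le> block_lift V b f x) \<longleftrightarrow> (\<forall>j<r. 1 \<le> f j)"
proof
  assume H: "\<forall>x\<in>V. 1 \<le> block_lift V b f x"
  show "\<forall>j<r. 1 \<le> f j"
  proof (intro allI impI)
    fix j assume "j < r"
    then obtain x where "x \<in> V" "b x = j" using fibre_nonempty by blast
    then show "1 \<le> f j" using H by (auto simp: block_lift_def)
  qed
next
  assume "\<forall>j<r. 1 \<le> f j"
  then show "\<forall>x\<in>V. 1 \<le> block_lift V b f x" using index_less_bound by (simp add: block_lift_def)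
qed

lemma block_lift_typed_iff:
  assumes "\<forall>j\<ge>r. f j = 0"
  shows "block_lift V b f \<in> typed_colourings V \<alpha> \<longleftrightarrow> f \<in> power_sum_fns (fibre_sizes V b r) \<alpha>"
proof -
  have "block_lift V b f \<in> typed_colourings V \<alpha>
      \<longleftrightarrow> (\<forall>x\<in>V. 1 \<le> block_lift V b f x) \<and> (\<forall>i. card {x\<in>V. block_lift V b f x = i} = \<alpha> i)"
    by (simp add: typed_colourings_def block_lift_def)
  also have "\<dots> \<longleftrightarrow> f \<in> power_sum_fns (fibre_sizes V b r) \<alpha>"
    using assms block_lift_pos_iff by (simp add: card_block_lift_fibre power_sum_fns_def fibre_sizes_props(1))
  finally show ?thesis .
qed

lemma block_constant_is_block_lift:
  assumes \<kappa>: "\<kappa> \<in> typed_colourings V \<alpha>" and const: "\<forall>x\<in>V. \<forall>y\<in>V. b x = b y \<longrightarrow> \<kappa> x = \<kappa> y"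
  shows "\<kappa> = block_lift V b (\<lambda>j. if j < r then \<kappa> (SOME x. x \<in> V \<and> b x = j) else 0)"
proof
  fix x show "\<kappa> x = block_lift V b (\<lambda>j. if j < r then \<kappa> (SOME x. x \<in> V \<and> b x = j) else 0) x"
  proof (cases "x \<in> V")
    case True
    define y where "y = (SOME y. y \<in> V \<and> b y = b x)"
    have "\<exists>y. y \<in> V \<and> b y = b x" using True by blast
    then have "y \<in> V \<and> b y = b x" unfolding y_def by (rule someI_ex)
    then have "\<kappa> y = \<kappa> x" using const True by blast
    moreover have "b x < r" using True by (rule index_less_bound)
    ultimately show ?thesis using True by (simp add: block_lift_def y_def)
  qed (use \<kappa> in \<open>simp add: block_lift_def typed_colourings_def\<close>)
qed

lemma inj_on_block_lift: "inj_on (block_lift V b) {f. \<forall>j\<ge>r. f j = 0}"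
proof (rule inj_onI)
  fix f g assume f: "f \<in> {f. \<forall>j\<ge>r. f j = 0}" and g: "g \<in> {f. \<forall>j\<ge>r. f j = 0}"
    and eq: "block_lift V b f = block_lift V b g"
  show "f = g"
  proof
    fix j show "f j = g j"
    proof (cases "j < r")
      case True
      then obtain x where "x \<in> V" "b x = j" using fibre_nonempty by blast
      then show ?thesis using fun_cong[OF eq, of x] by (simp add: block_lift_def)
    qed (use f g in simp)
  qed
qed

lemma card_block_constant_colourings:
  "card {\<kappa>\<in>typed_colourings V \<alpha>. \<forall>x\<in>V. \<forall>y\<in>V. b x = b y \<longrightarrow> \<kappa> x = \<kappa> y}
   = power_sum (fibre_sizes V b r) \<alpha>"
proof -
  let ?K = "{\<kappa>\<in>typed_colourings V \<alpha>. \<forall>x\<in>V. \<forall>y\<in>V. b x = b y \<longrightarrow> \<kappa> x = \<kappa> y}"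
  let ?F = "power_sum_fns (fibre_sizes V b r) \<alpha>"
  have FZ: "?F \<subseteq> {f. \<forall>j\<ge>r. f j = 0}" by (auto simp: power_sum_fns_def fibre_sizes_props(1))
  have "?K = block_lift V b ` ?F"
  proof
    show "?K \<subseteq> block_lift V b ` ?F"
    proof
      fix \<kappa> assume \<kappa>: "\<kappa> \<in> ?K"
      define f where "f j = (if j < r then \<kappa> (SOME x. x \<in> V \<and> b x = j) else 0)" for j
      have "\<kappa> = block_lift V b f" unfolding f_def using \<kappa> by (intro block_constant_is_block_lift) blast+
      moreover have "f \<in> ?F"
      proof -
        have "\<forall>j\<ge>r. f j = 0" by (simp add: f_def)
        moreover have "\<kappa> \<in> typed_colourings V \<alpha>" using \<kappa> by blast
        then have "block_lift V b f \<in> typed_colourings V \<alpha>" using \<open>\<kappa> = block_lift V b f\<close> by simp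
        ultimately show ?thesis using block_lift_typed_iff by simp
      qed
      ultimately show "\<kappa> \<in> block_lift V b ` ?F" by (rule image_eqI)
    qed
    show "block_lift V b ` ?F \<subseteq> ?K"
    proof (rule image_subsetI)
      fix f assume "f \<in> ?F"
      moreover have "\<forall>j\<ge>r. f j = 0" using \<open>f \<in> ?F\<close> FZ by blast
      ultimately have "block_lift V b f \<in> typed_colourings V \<alpha>" using block_lift_typed_iff by simp
      moreover have "\<forall>x\<in>V. \<forall>y\<in>V. b x = b y \<longrightarrow> block_lift V b f x = block_lift V b f y"
        by (simp add: block_lift_def)
      ultimately show "block_lift V b f \<in> ?K" by blast
    qed
  qed
  moreover have "inj_on (block_lift V b) ?F" by (rule inj_on_subset[OF inj_on_block_lift FZ])
  ultimately show ?thesis by (simp add: card_image power_sum_def)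
qed

end

lemma power_sum_fnsD:
  assumes "f \<in> power_sum_fns c \<alpha>"
  shows "\<And>j. j < length c \<Longrightarrow> 1 \<le> f j" "\<And>j. length c \<le> j \<Longrightarrow> f j = 0"
    "\<And>i. (\<Sum>j\<in>{j. j<length c \<and> f j = i}. c!j) = \<alpha> i"
  using assms by (simp_all add: power_sum_fns_def)

lemma sum_permute_list_fibre:
  assumes p: "p permutes {..<length d}" and c: "c = permute_list p d"
  shows "(\<Sum>k\<in>{k. k<length d \<and> f (inv p k) = i}. d!k) = (\<Sum>j\<in>{j. j<length c \<and> f j = i}. c!j)"
proof -
  have lc: "length c = length d" using c by simp
  have "{k. k<length d \<and> f (inv p k) = i} = p ` {j. j<length c \<and> f j = i}"
  proof (rule set_eqI, rule iffI)
    fix k assume k: "k \<in> {k. k<length d \<and> f (inv p k) = i}"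
    then have "inv p k < length d" using permutes_in_image[OF permutes_inv[OF p]] by auto
    then show "k \<in> p ` {j. j<length c \<and> f j = i}" using k lc permutes_inverses[OF p]
      by (auto intro!: image_eqI[where x="inv p k"])
  next
    fix k assume "k \<in> p ` {j. j<length c \<and> f j = i}"
    then obtain j where j: "j < length c" "f j = i" "k = p j" by auto
    then show "k \<in> {k. k<length d \<and> f (inv p k) = i}"
      using permutes_in_image[OF p] permutes_inverses[OF p] lc by auto
  qed
  moreover have "inj_on p {j. j<length c \<and> f j = i}"
    using permutes_inj[OF p] by (auto intro: inj_on_subset)
  ultimately have "(\<Sum>k\<in>{k. k<length d \<and> f (inv p k) = i}. d!k) = (\<Sum>j\<in>{j. j<length c \<and> f j = i}. d!(p j))"
    by (simp add: sum.reindex)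
  also have "\<dots> = (\<Sum>j\<in>{j. j<length c \<and> f j = i}. c!j)"
    by (rule sum.cong) (auto simp: c permute_list_nth[OF p])
  finally show ?thesis .
qed

lemma power_sum_fns_permute_list:
  assumes p: "p permutes {..<length d}" and f: "f \<in> power_sum_fns (permute_list p d) \<alpha>"
  shows "f \<circ> inv p \<in> power_sum_fns d \<alpha>"
proof -
  have ip: "inv p permutes {..<length d}" by (rule permutes_inv[OF p])
  have "\<forall>k<length d. 1 \<le> (f \<circ> inv p) k"
    using power_sum_fnsD(1)[OF f] permutes_in_image[OF ip] by simp
  moreover have "\<forall>k. length d \<le> k \<longrightarrow> (f \<circ> inv p) k = 0"
    using power_sum_fnsD(2)[OF f] permutes_not_in[OF ip] by simp
  moreover have "\<forall>i. (\<Sum>k\<in>{k. k<length d \<and> (f \<circ> inv p) k = i}. d!k) = \<alpha> i"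
    using sum_permute_list_fibre[OF p refl, of f] power_sum_fnsD(3)[OF f] by simp
  ultimately show ?thesis unfolding power_sum_fns_def by blast
qed

lemma power_sum_mset_eq:
  assumes "mset c = mset d"
  shows "power_sum c \<alpha> = power_sum d \<alpha>"
proof -
  obtain p where p: "p permutes {..<length d}" and c: "permute_list p d = c"
    using mset_eq_permutation[OF assms] by blast
  have ip: "inv p permutes {..<length c}" using permutes_inv[OF p] c by auto
  have d: "permute_list (inv p) c = d"
    using permute_list_compose[OF permutes_inv[OF p], of p] c permutes_inv_o(1)[OF p] by simp
  have "bij_betw (\<lambda>f. f \<circ> inv p) (power_sum_fns c \<alpha>) (power_sum_fns d \<alpha>)"
  proof (rule bij_betw_byWitness[where f'="\<lambda>g. g \<circ> p"])
    show "\<forall>f\<in>power_sum_fns c \<alpha>. f \<circ> inv p \<circ> p = f"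
      using permutes_inverses[OF p] by (simp add: fun_eq_iff)
    show "\<forall>g\<in>power_sum_fns d \<alpha>. g \<circ> p \<circ> inv p = g"
      using permutes_inverses[OF p] by (simp add: fun_eq_iff)
    show "(\<lambda>f. f \<circ> inv p) ` power_sum_fns c \<alpha> \<subseteq> power_sum_fns d \<alpha>"
      using power_sum_fns_permute_list[OF p] c by blast
    show "(\<lambda>g. g \<circ> p) ` power_sum_fns d \<alpha> \<subseteq> power_sum_fns c \<alpha>"
      using power_sum_fns_permute_list[OF ip] d inv_inv_eq[OF permutes_bij[OF p]] by auto
  qed
  then show ?thesis unfolding power_sum_def by (rule bij_betw_same_card)
qed

text \<open>The exponent vector of \<open>x\<^sub>1\<^bsup>\<mu>\<^sub>1\<^esup> x\<^sub>2\<^bsup>\<mu>\<^sub>2\<^esup> \<cdots>\<close>.\<close>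

definition monomial_exps :: "nat list \<Rightarrow> nat \<Rightarrow> nat" where
  "monomial_exps \<mu> i = (if 1 \<le> i \<and> i \<le> length \<mu> then \<mu>!(i-1) else 0)"

lemma power_sum_fns_le:
  assumes f: "f \<in> power_sum_fns c \<alpha>" and j: "j < length c"
  shows "c!j \<le> \<alpha> (f j)"
proof -
  have "c!j \<le> (\<Sum>j'\<in>{j'. j'<length c \<and> f j' = f j}. c!j')"
    by (rule member_le_sum) (use j in auto)
  then show ?thesis using power_sum_fnsD(3)[OF f, of "f j"] by simp
qed

lemma power_sum_fns_pos:
  assumes f: "f \<in> power_sum_fns c \<alpha>" and j: "j < length c" and c0: "0 \<notin> set c"
  shows "0 < \<alpha> (f j)"
proof -
  have "c!j \<noteq> 0" using c0 j by (metis nth_mem)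
  then show ?thesis using power_sum_fns_le[OF f j] by simp
qed

lemma finite_power_sum_fns:
  assumes c0: "0 \<notin> set c" and fin: "finite {i. \<alpha> i \<noteq> 0}"
  shows "finite (power_sum_fns c \<alpha>)"
proof (rule finite_subset)
  show "power_sum_fns c \<alpha> \<subseteq> {f. \<forall>x. (x \<in> {..<length c} \<longrightarrow> f x \<in> {i. \<alpha> i \<noteq> 0}) \<and> (x \<notin> {..<length c} \<longrightarrow> f x = 0)}"
  proof
    fix f assume f: "f \<in> power_sum_fns c \<alpha>"
    have "\<forall>x. (x \<in> {..<length c} \<longrightarrow> f x \<in> {i. \<alpha> i \<noteq> 0}) \<and> (x \<notin> {..<length c} \<longrightarrow> f x = 0)"
    proof (intro allI conjI impI)
      fix x assume "x \<in> {..<length c}"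
      then have "0 < \<alpha> (f x)" using power_sum_fns_pos[OF f _ c0] by simp
      then show "f x \<in> {i. \<alpha> i \<noteq> 0}" by simp
    next
      fix x assume "x \<notin> {..<length c}"
      then show "f x = 0" using power_sum_fnsD(2)[OF f] by simp
    qed
    then show "f \<in> {f. \<forall>x. (x \<in> {..<length c} \<longrightarrow> f x \<in> {i. \<alpha> i \<noteq> 0}) \<and> (x \<notin> {..<length c} \<longrightarrow> f x = 0)}" by simp
  qed
  show "finite \<dots>" by (rule finite_set_of_finite_funs) (use fin in auto)
qed

lemma monomial_exps_covered:
  assumes f: "f \<in> power_sum_fns c (monomial_exps \<mu>)" and m0: "0 \<notin> set \<mu>"
  shows "{1..length \<mu>} \<subseteq> f ` {..<length c}"
proof
  fix i assume i: "i \<in> {1..length \<mu>}"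
  then have "\<mu>!(i-1) \<in> set \<mu>" by (intro nth_mem) auto
  then have "\<mu>!(i-1) \<noteq> 0" using m0 by metis
  then have "monomial_exps \<mu> i \<noteq> 0" using i by (simp add: monomial_exps_def)
  then have "(\<Sum>j\<in>{j. j<length c \<and> f j = i}. c!j) \<noteq> 0" using power_sum_fnsD(3)[OF f, of i] by simp
  then have "{j. j<length c \<and> f j = i} \<noteq> {}" by (rule contrapos_nn) auto
  then show "i \<in> f ` {..<length c}" by auto
qed

lemma monomial_exps_range:
  assumes f: "f \<in> power_sum_fns c (monomial_exps \<mu>)" and c0: "0 \<notin> set c"
  shows "f ` {..<length c} \<subseteq> {1..length \<mu>}"
proof
  fix i assume "i \<in> f ` {..<length c}"
  then obtain j where j: "j < length c" "i = f j" by auto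
  have "0 < monomial_exps \<mu> i" using power_sum_fns_pos[OF f j(1) c0] j by simp
  then show "i \<in> {1..length \<mu>}" by (auto simp: monomial_exps_def split: if_splits)
qed

lemma power_sum_monomial_length:
  assumes c0: "0 \<notin> set c" and m0: "0 \<notin> set \<mu>" and nz: "power_sum c (monomial_exps \<mu>) \<noteq> 0"
  shows "length \<mu> \<le> length c"
proof -
  obtain f where f: "f \<in> power_sum_fns c (monomial_exps \<mu>)"
    using nz unfolding power_sum_def by (metis card.empty ex_in_conv)
  have "card {1..length \<mu>} \<le> card (f ` {..<length c})"
    by (rule card_mono[OF _ monomial_exps_covered[OF f m0]]) simp
  also have "\<dots> \<le> card {..<length c}" by (rule card_image_le) simp
  finally show ?thesis by simp
qed

lemma power_sum_monomial_mset:
  assumes c0: "0 \<notin> set c" and m0: "0 \<notin> set \<mu>" and nz: "power_sum c (monomial_exps \<mu>) \<noteq> 0"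
    and len: "length c = length \<mu>"
  shows "mset c = mset \<mu>"
proof -
  let ?l = "length c"
  obtain f where f: "f \<in> power_sum_fns c (monomial_exps \<mu>)"
    using nz unfolding power_sum_def by (metis card.empty ex_in_conv)
  have img: "f ` {..<?l} = {1..?l}"
    using monomial_exps_covered[OF f m0] monomial_exps_range[OF f c0] len by simp
  then have inj: "inj_on f {..<?l}" by (intro eq_card_imp_inj_on) auto
  define s where "s j = (if j < ?l then f j - 1 else j)" for j
  have "bij_betw f {..<?l} {1..?l}" using img inj by (simp add: bij_betw_def)
  moreover have "bij_betw (\<lambda>i. i - 1) {1..?l} {..<?l}"
    by (rule bij_betw_byWitness[where f'=Suc]) auto
  ultimately have "bij_betw (\<lambda>j. f j - 1) {..<?l} {..<?l}" by (rule bij_betw_trans[unfolded comp_def])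
  then have "bij_betw s {..<?l} {..<?l}" by (rule bij_betw_cong[THEN iffD1, rotated]) (simp add: s_def)
  then have sperm: "s permutes {..<length \<mu>}"
    by (intro bij_imp_permutes) (simp_all add: s_def len)
  have "c!j = \<mu>!(s j)" if j: "j < ?l" for j
  proof -
    have "{j'. j'<?l \<and> f j' = f j} = {j}" using inj j by (auto dest: inj_onD)
    then have "c!j = monomial_exps \<mu> (f j)" using power_sum_fnsD(3)[OF f, of "f j"] by simp
    moreover have "f j \<in> {1..?l}" using img j by auto
    ultimately show ?thesis using len j by (simp add: monomial_exps_def s_def)
  qed
  then have "permute_list s \<mu> = c"
    by (intro nth_equalityI) (use len permute_list_nth[OF sperm] in auto)
  then show ?thesis by (metis mset_permute_list[OF sperm])
qed

lemma power_sum_monomial_self: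
  assumes m0: "0 \<notin> set \<mu>"
  shows "power_sum \<mu> (monomial_exps \<mu>) \<noteq> 0"
proof -
  let ?l = "length \<mu>"
  define f where "f j = (if j < ?l then j+1 else 0)" for j
  have "f \<in> power_sum_fns \<mu> (monomial_exps \<mu>)"
  proof -
    have sums: "(\<Sum>j\<in>{j. j<?l \<and> f j = i}. \<mu>!j) = monomial_exps \<mu> i" for i
    proof (cases "1 \<le> i \<and> i \<le> ?l")
      case True
      then have "{j. j<?l \<and> f j = i} = {i-1}" by (auto simp: f_def)
      then show ?thesis using True by (simp add: monomial_exps_def)
    next
      case False
      then have e: "{j. j<?l \<and> f j = i} = {}" by (auto simp: f_def)
      show ?thesis unfolding e using False by (auto simp: monomial_exps_def)
    qed
    have "\<forall>j<?l. 1 \<le> f j" "\<forall>j. ?l \<le> j \<longrightarrow> f j = 0" by (auto simp: f_def)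
    then show ?thesis unfolding power_sum_fns_def using sums by blast
  qed
  moreover have "finite (power_sum_fns \<mu> (monomial_exps \<mu>))"
  proof (rule finite_power_sum_fns[OF m0])
    show "finite {i. monomial_exps \<mu> i \<noteq> 0}" by (rule finite_subset[of _ "{..length \<mu>}"]) (auto simp: monomial_exps_def split: if_splits)
  qed
  ultimately show ?thesis unfolding power_sum_def by (auto simp: card_eq_0_iff)
qed

lemma sorted_desc_eq:
  assumes "sorted_wrt (\<ge>) xs" "sorted_wrt (\<ge>) ys" "mset xs = mset ys"
  shows "xs = (ys::nat list)"
proof -
  have "sorted (rev xs)" "sorted (rev ys)" using assms(1,2) by (simp_all add: sorted_wrt_rev)
  moreover have "mset (rev xs) = mset (rev ys)" using assms(3) by simp
  ultimately have "rev xs = rev ys" by (metis properties_for_sort)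
  then show ?thesis by simp
qed

text \<open>Triangularity: at the monomial of a longest \<open>\<nu>\<close> with nonzero coefficient, every
  other \<open>p\<^sub>\<nu>\<close> in the sum vanishes.\<close>

lemma power_sums_independent:
  assumes fin: "finite P" and Pp: "\<And>\<nu>. \<nu>\<in>P \<Longrightarrow> 0\<notin>set \<nu> \<and> sorted_wrt (\<ge>) \<nu>"
    and z: "\<And>\<alpha>. (\<Sum>\<nu>\<in>P. B \<nu> * of_nat (power_sum \<nu> \<alpha>)) = (0::rat)"
  shows "\<forall>\<nu>\<in>P. B \<nu> = 0"
proof (rule ccontr)
  assume "\<not> (\<forall>\<nu>\<in>P. B \<nu> = 0)"
  then have Zne: "{\<nu>\<in>P. B \<nu> \<noteq> 0} \<noteq> {}" by auto
  let ?Z = "{\<nu>\<in>P. B \<nu> \<noteq> 0}"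
  have Zfin: "finite ?Z" using fin by simp
  define L where "L = Max (length ` ?Z)"
  have "L \<in> length ` ?Z" unfolding L_def using Zfin Zne by (intro Max_in) auto
  then obtain \<nu>0 where n0: "\<nu>0 \<in> P" "B \<nu>0 \<noteq> 0" "length \<nu>0 = L" by auto
  have Lmax: "\<And>\<nu>. \<nu> \<in> P \<Longrightarrow> B \<nu> \<noteq> 0 \<Longrightarrow> length \<nu> \<le> L"
    unfolding L_def using Zfin by (intro Max_ge) auto
  have others: "B \<nu> * of_nat (power_sum \<nu> (monomial_exps \<nu>0)) = 0" if \<nu>: "\<nu> \<in> P - {\<nu>0}" for \<nu>
  proof (rule ccontr)
    assume "B \<nu> * of_nat (power_sum \<nu> (monomial_exps \<nu>0)) \<noteq> 0"
    then have Bn: "B \<nu> \<noteq> 0" and pn: "power_sum \<nu> (monomial_exps \<nu>0) \<noteq> 0" by auto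
    have "length \<nu>0 \<le> length \<nu>" using power_sum_monomial_length[OF _ _ pn] Pp \<nu> n0 by auto
    moreover have "length \<nu> \<le> L" using Lmax Bn \<nu> by auto
    ultimately have "length \<nu> = length \<nu>0" using n0 by simp
    then have "mset \<nu> = mset \<nu>0" using power_sum_monomial_mset[OF _ _ pn] Pp \<nu> n0 by auto
    then have "\<nu> = \<nu>0" using sorted_desc_eq Pp \<nu> n0 by blast
    then show False using \<nu> by simp
  qed
  have "(\<Sum>\<nu>\<in>P. B \<nu> * of_nat (power_sum \<nu> (monomial_exps \<nu>0))) = B \<nu>0 * of_nat (power_sum \<nu>0 (monomial_exps \<nu>0))"
    by (rule sum.remove[OF fin n0(1), THEN trans]) (simp add: others sum.neutral)
  also have "\<dots> \<noteq> 0" using n0 power_sum_monomial_self Pp by auto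
  finally show False using z by simp
qed


section \<open>Blocks of a set of path edges\<close>

text \<open>A set \<open>S\<close> of edges of the path \<open>0 - 1 - \<cdots> - (n - 1)\<close> cuts it into consecutive blocks;
  \<open>block_starts n S\<close> are the first vertices of all blocks but the first, and
  \<open>block_index n S x\<close> numbers the block containing \<open>x\<close>.\<close>

definition path_edges :: "nat \<Rightarrow> nat set set" where
  "path_edges n = {{i, Suc i} | i. Suc i < n}"

definition block_starts :: "nat \<Rightarrow> nat set set \<Rightarrow> nat set" where
  "block_starts n S = {i. 1 \<le> i \<and> i < n \<and> {i-1, i} \<notin> S}"

definition block_index :: "nat \<Rightarrow> nat set set \<Rightarrow> nat \<Rightarrow> nat" where
  "block_index n S x = card {i\<in>block_starts n S. i \<le> x}"

definition block_sizes :: "nat \<Rightarrow> nat set set \<Rightarrow> nat list" where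
  "block_sizes n S = fibre_sizes {0..<n} (block_index n S) (n - card S)"

lemma finite_block_starts[simp]: "finite (block_starts n S)"
  by (rule finite_subset[of _ "{..<n}"]) (auto simp: block_starts_def)

lemma finite_path_edges[simp]: "finite (path_edges n)"
proof -
  have "path_edges n = (\<lambda>i. {i, Suc i}) ` {i. Suc i < n}" by (auto simp: path_edges_def)
  moreover have "finite {i. Suc i < n}" by (rule finite_subset[of _ "{..<n}"]) auto
  ultimately show ?thesis by simp
qed

lemma consecutive_pair_inj: "1 \<le> i \<Longrightarrow> 1 \<le> j \<Longrightarrow> {i-1, i} = {j-1, (j::nat)} \<Longrightarrow> i = j"
  by (metis Suc_pred' diff_le_self doubleton_eq_iff le_antisym less_one not_le)

lemma card_add_card_block_starts:
  assumes S: "S \<subseteq> path_edges n" and n: "1 \<le> n"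
  shows "card S + card (block_starts n S) = n - 1"
proof -
  have Seq: "S = (\<lambda>i. {i-1, i}) ` ({1..<n} - block_starts n S)"
  proof (rule set_eqI, rule iffI)
    fix e assume e: "e \<in> S"
    then obtain m where m: "e = {m, Suc m}" "Suc m < n" using S by (auto simp: path_edges_def)
    then have "Suc m \<in> {1..<n} - block_starts n S" using e by (auto simp: block_starts_def)
    moreover have "e = {Suc m - 1, Suc m}" using m by simp
    ultimately show "e \<in> (\<lambda>i. {i-1, i}) ` ({1..<n} - block_starts n S)" by blast
  next
    fix e assume "e \<in> (\<lambda>i. {i-1, i}) ` ({1..<n} - block_starts n S)"
    then show "e \<in> S" by (auto simp: block_starts_def)
  qed
  have inj: "inj_on (\<lambda>i. {i-1, i}) ({1..<n} - block_starts n S)"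
  proof (rule inj_onI)
    fix x y assume "x \<in> {1..<n} - block_starts n S" "y \<in> {1..<n} - block_starts n S" "{x-1, x} = {y-1, y}"
    then show "x = y" using consecutive_pair_inj[of x y] by simp
  qed
  have "card S = card ({1..<n} - block_starts n S)" by (subst Seq) (rule card_image[OF inj])
  also have "\<dots> = card {1..<n} - card (block_starts n S)"
    by (rule card_Diff_subset) (auto simp: block_starts_def)
  finally have "card S = (n - 1) - card (block_starts n S)" by simp
  moreover have "card (block_starts n S) \<le> card {1..<n}" by (rule card_mono) (auto simp: block_starts_def)
  ultimately show ?thesis by simp
qed

lemma block_index_mono: "x \<le> y \<Longrightarrow> block_index n S x \<le> block_index n S y"
  unfolding block_index_def by (rule card_mono) auto

lemma block_index_0: "block_index n S 0 = 0"
  unfolding block_index_def by (auto simp: block_starts_def)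

lemma block_index_Suc_not_start: "Suc x \<notin> block_starts n S \<Longrightarrow> block_index n S (Suc x) = block_index n S x"
proof -
  assume a: "Suc x \<notin> block_starts n S"
  have "{i\<in>block_starts n S. i \<le> Suc x} = {i\<in>block_starts n S. i \<le> x}" using a by (auto simp: le_Suc_eq)
  then show ?thesis by (simp add: block_index_def)
qed

lemma block_index_Suc_start: "Suc x \<in> block_starts n S \<Longrightarrow> block_index n S (Suc x) = Suc (block_index n S x)"
proof -
  assume a: "Suc x \<in> block_starts n S"
  have "{i\<in>block_starts n S. i \<le> Suc x} = insert (Suc x) {i\<in>block_starts n S. i \<le> x}" using a by (auto simp: le_Suc_eq)
  moreover have "finite {i\<in>block_starts n S. i \<le> x}" by simp
  ultimately show ?thesis by (simp add: block_index_def)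
qed

lemma block_index_Suc_le: "block_index n S (Suc x) \<le> Suc (block_index n S x)"
  by (cases "Suc x \<in> block_starts n S") (simp_all add: block_index_Suc_start block_index_Suc_not_start)

lemma block_index_le: "block_index n S x \<le> card (block_starts n S)"
  unfolding block_index_def by (rule card_mono) auto

lemma block_index_last: "1 \<le> n \<Longrightarrow> block_index n S (n - 1) = card (block_starts n S)"
proof -
  assume "1 \<le> n"
  then have "{i\<in>block_starts n S. i \<le> n - 1} = block_starts n S" by (auto simp: block_starts_def)
  then show ?thesis by (simp add: block_index_def)
qed

lemma block_index_attains: "k \<le> block_index n S y \<Longrightarrow> \<exists>x\<le>y. block_index n S x = k"
proof (induction y arbitrary: k)
  case 0 then show ?case by (simp add: block_index_0)
next
  case (Suc y)
  show ?case
  proof (cases "k = block_index n S (Suc y)")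
    case True then show ?thesis by blast
  next
    case False
    then have "k \<le> block_index n S y" using Suc.prems block_index_Suc_le[of n S y] by simp
    then obtain x where "x \<le> y" "block_index n S x = k" using Suc.IH by blast
    then show ?thesis by (intro exI[of _ x]) simp
  qed
qed

lemma block_index_image:
  assumes S: "S \<subseteq> path_edges n"
  shows "block_index n S ` {0..<n} = {0..<n - card S}"
proof (cases "n = 0")
  case True
  then have "S = {}" using S by (auto simp: path_edges_def)
  then show ?thesis using True by simp
next
  case False
  then have n: "1 \<le> n" by simp
  have r: "n - card S = Suc (card (block_starts n S))" using card_add_card_block_starts[OF S n] n by simp
  show ?thesis
  proof (rule set_eqI, rule iffI)
    fix k assume "k \<in> block_index n S ` {0..<n}"
    then show "k \<in> {0..<n - card S}" using block_index_le r by (auto simp: less_Suc_eq_le)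
  next
    fix k assume "k \<in> {0..<n - card S}"
    then have "k \<le> block_index n S (n - 1)" using r block_index_last[OF n] by simp
    then obtain x where "x \<le> n - 1" "block_index n S x = k" using block_index_attains by blast
    then show "k \<in> block_index n S ` {0..<n}" using n by (intro image_eqI[of _ _ x]) auto
  qed
qed

lemma edge_if_block_index_Suc_eq:
  assumes "Suc z < n" "block_index n S (Suc z) = block_index n S z"
  shows "{z, Suc z} \<in> S"
proof -
  have "Suc z \<notin> block_starts n S"
  proof
    assume "Suc z \<in> block_starts n S"
    then have "block_index n S (Suc z) = Suc (block_index n S z)" by (rule block_index_Suc_start)
    with assms(2) show False by simp
  qed
  then show ?thesis using assms(1) by (simp add: block_starts_def)
qed

lemma block_constant_if_constant_on_edges:
  assumes H: "\<forall>e\<in>S. \<forall>a\<in>e. \<forall>b\<in>e. \<kappa> a = \<kappa> b"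
    and "x \<le> y" "y < n" "block_index n S x = block_index n S y"
  shows "\<kappa> x = \<kappa> y"
  using assms(2-)
proof (induction y rule: dec_induct)
  case base
  show ?case by (rule refl)
next
  case (step z)
  have "block_index n S x \<le> block_index n S z" using step.hyps(1) by (rule block_index_mono)
  moreover have "block_index n S z \<le> block_index n S (Suc z)" by (rule block_index_mono) simp
  ultimately have same: "block_index n S (Suc z) = block_index n S z" using step.prems(2) by linarith
  then have "{z, Suc z} \<in> S" using step.prems(1) by (intro edge_if_block_index_Suc_eq)
  then have "\<kappa> z = \<kappa> (Suc z)" using H by simp
  moreover have "\<kappa> x = \<kappa> z" using step.IH step.prems same by simp
  ultimately show ?case by simp
qed

lemma constant_on_edges_iff_block_constant:
  assumes S: "S \<subseteq> path_edges n"
  shows "(\<forall>e\<in>S. \<forall>a\<in>e. \<forall>b\<in>e. \<kappa> a = \<kappa> b) \<longleftrightarrow>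
         (\<forall>x\<in>{0..<n}. \<forall>y\<in>{0..<n}. block_index n S x = block_index n S y \<longrightarrow> \<kappa> x = \<kappa> y)"
proof
  assume H: "\<forall>e\<in>S. \<forall>a\<in>e. \<forall>b\<in>e. \<kappa> a = \<kappa> b"
  show "\<forall>x\<in>{0..<n}. \<forall>y\<in>{0..<n}. block_index n S x = block_index n S y \<longrightarrow> \<kappa> x = \<kappa> y"
  proof (intro ballI impI)
    fix x y assume xy: "x \<in> {0..<n}" "y \<in> {0..<n}" "block_index n S x = block_index n S y"
    show "\<kappa> x = \<kappa> y"
    proof (cases "x \<le> y")
      case True
      then show ?thesis using block_constant_if_constant_on_edges[OF H True] xy by simp
    next
      case False
      then have "y \<le> x" by simp
      then show ?thesis using block_constant_if_constant_on_edges[OF H \<open>y \<le> x\<close>] xy by simp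
    qed
  qed
next
  assume H: "\<forall>x\<in>{0..<n}. \<forall>y\<in>{0..<n}. block_index n S x = block_index n S y \<longrightarrow> \<kappa> x = \<kappa> y"
  show "\<forall>e\<in>S. \<forall>a\<in>e. \<forall>b\<in>e. \<kappa> a = \<kappa> b"
  proof (intro ballI)
    fix e a b assume e: "e \<in> S" and ab: "a \<in> e" "b \<in> e"
    obtain m where m: "e = {m, Suc m}" "Suc m < n" using e S by (auto simp: path_edges_def)
    then have "Suc m \<notin> block_starts n S" using e by (auto simp: block_starts_def)
    then have "block_index n S (Suc m) = block_index n S m" by (rule block_index_Suc_not_start)
    then have "\<kappa> (Suc m) = \<kappa> m" using H[rule_format, of "Suc m" m] m by simp
    then show "\<kappa> a = \<kappa> b" using ab m by auto
  qed
qed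

lemma block_sizes_props:
  assumes S: "S \<subseteq> path_edges n"
  shows "length (block_sizes n S) = n - card S" "0 \<notin> set (block_sizes n S)" "sum_list (block_sizes n S) = n"
  using fibre_sizes_props[OF _ block_index_image[OF S]] by (simp_all add: block_sizes_def)

definition prefix_sum :: "nat list \<Rightarrow> nat \<Rightarrow> nat" where
  "prefix_sum l k = sum_list (take k l)"

lemma prefix_sum_0[simp]: "prefix_sum l 0 = 0" by (simp add: prefix_sum_def)
lemma prefix_sum_length: "prefix_sum l (length l) = sum_list l" by (simp add: prefix_sum_def)
lemma prefix_sum_Suc: "k < length l \<Longrightarrow> prefix_sum l (Suc k) = prefix_sum l k + l!k"
  by (simp add: prefix_sum_def take_Suc_conv_app_nth)

lemma prefix_sum_strict:
  assumes l0: "0 \<notin> set l"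
  shows "k < k' \<Longrightarrow> k' \<le> length l \<Longrightarrow> prefix_sum l k < prefix_sum l k'"
proof (induction k')
  case 0 then show ?case by simp
next
  case (Suc k')
  have "l!k' \<noteq> 0" using l0 Suc.prems by (metis Suc_le_eq nth_mem)
  then have "prefix_sum l k' < prefix_sum l (Suc k')" using prefix_sum_Suc[of k' l] Suc.prems by simp
  moreover have "prefix_sum l k \<le> prefix_sum l k'"
  proof (cases "k < k'")
    case True then show ?thesis using Suc.IH Suc.prems by simp
  next
    case False then have "k = k'" using Suc.prems by simp
    then show ?thesis by simp
  qed
  ultimately show ?case by simp
qed

lemma prefix_sum_mono:
  assumes l0: "0 \<notin> set l" and "k \<le> k'" "k' \<le> length l"
  shows "prefix_sum l k \<le> prefix_sum l k'"
  using prefix_sum_strict[OF l0, of k k'] assms by (cases "k = k'") auto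

lemma prefix_sum_ge:
  assumes l0: "0 \<notin> set l"
  shows "k \<le> length l \<Longrightarrow> k \<le> prefix_sum l k"
proof (induction k)
  case 0 then show ?case by simp
next
  case (Suc k)
  then show ?case using prefix_sum_strict[OF l0, of k "Suc k"] by simp
qed

lemma prefix_sum_inj:
  assumes l0: "0 \<notin> set l"
  shows "inj_on (prefix_sum l) {..length l}"
proof (rule inj_onI)
  fix x y assume "x \<in> {..length l}" "y \<in> {..length l}" "prefix_sum l x = prefix_sum l y"
  then show "x = y" using prefix_sum_strict[OF l0, of x y] prefix_sum_strict[OF l0, of y x]
    by (metis atMost_iff linorder_neqE_nat less_irrefl)
qed

lemma path_E_subset: "path_E l \<subseteq> path_edges (sum_list l)"
  by (auto simp: path_E_def path_edges_def)

lemma path_E_mem: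
  "{m, Suc m} \<in> path_E l \<longleftrightarrow> Suc m < sum_list l \<and> Suc m \<notin> {sum_list (take k l) | k. k \<le> length l}"
proof
  assume "{m, Suc m} \<in> path_E l"
  then have "\<exists>i. {m, Suc m} = {i, Suc i} \<and> Suc i < sum_list l \<and>
     Suc i \<notin> {sum_list (take k l) | k. k \<le> length l}" unfolding path_E_def by (simp only: mem_Collect_eq)
  then obtain i where i: "{m, Suc m} = {i, Suc i}" "Suc i < sum_list l"
     "Suc i \<notin> {sum_list (take k l) | k. k \<le> length l}" by (elim exE conjE) (rule that)
  have "(m = i \<and> Suc m = Suc i) \<or> (m = Suc i \<and> Suc m = i)"
    using i(1) by (simp only: doubleton_eq_iff)
  then have "m = i" by auto
  then show "Suc m < sum_list l \<and> Suc m \<notin> {sum_list (take k l) | k. k \<le> length l}" using i by simp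
next
  assume "Suc m < sum_list l \<and> Suc m \<notin> {sum_list (take k l) | k. k \<le> length l}"
  then show "{m, Suc m} \<in> path_E l" by (auto simp: path_E_def)
qed

lemma block_starts_path_E:
  assumes l0: "0 \<notin> set l"
  shows "block_starts (sum_list l) (path_E l) = prefix_sum l ` {1..<length l}"
proof (rule set_eqI, rule iffI)
  fix i assume "i \<in> block_starts (sum_list l) (path_E l)"
  then have i: "1 \<le> i" "i < sum_list l" "{i-1, i} \<notin> path_E l" by (auto simp: block_starts_def)
  obtain m where m: "i = Suc m" using i(1) by (metis Suc_le_D One_nat_def)
  have "{m, Suc m} \<notin> path_E l" using i(3) m by simp
  then have "Suc m \<in> {sum_list (take k l) | k. k \<le> length l}" using i(2) m path_E_mem by blast
  then obtain k where k: "k \<le> length l" "i = prefix_sum l k" using m by (auto simp: prefix_sum_def)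
  have "k \<noteq> 0"
  proof
    assume "k = 0" then show False using k i(1) by simp
  qed
  moreover have "k \<noteq> length l" using k i(2) prefix_sum_length[of l] by auto
  ultimately show "i \<in> prefix_sum l ` {1..<length l}" using k by auto
next
  fix i assume "i \<in> prefix_sum l ` {1..<length l}"
  then obtain k where k: "1 \<le> k" "k < length l" "i = prefix_sum l k" by auto
  have "1 \<le> i" using prefix_sum_ge[OF l0, of k] k by simp
  moreover have "i < sum_list l" using prefix_sum_strict[OF l0, of k "length l"] k prefix_sum_length[of l] by simp
  moreover have "{i-1, i} \<notin> path_E l"
  proof
    assume a: "{i-1, i} \<in> path_E l"
    have "i = Suc (i-1)" using \<open>1 \<le> i\<close> by simp
    then have "{i-1, Suc (i-1)} \<in> path_E l" using a by simp
    then have "Suc (i-1) \<notin> {sum_list (take k l) | k. k \<le> length l}" using path_E_mem by blast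
    then show False using k \<open>i = Suc (i-1)\<close> by (auto simp: prefix_sum_def)
  qed
  ultimately show "i \<in> block_starts (sum_list l) (path_E l)" by (simp add: block_starts_def)
qed

lemma block_index_path_E:
  assumes l0: "0 \<notin> set l" and j: "j < length l" and x: "prefix_sum l j \<le> x" "x < prefix_sum l (Suc j)"
  shows "block_index (sum_list l) (path_E l) x = j"
proof -
  have "{i\<in>block_starts (sum_list l) (path_E l). i \<le> x} = prefix_sum l ` {1..j}"
  proof (rule set_eqI, rule iffI)
    fix i assume "i \<in> {i\<in>block_starts (sum_list l) (path_E l). i \<le> x}"
    then obtain k where k: "1 \<le> k" "k < length l" "i = prefix_sum l k" "i \<le> x" using block_starts_path_E[OF l0] by auto
    have "k < Suc j"
    proof (rule ccontr)
      assume "\<not> k < Suc j"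
      then have "prefix_sum l (Suc j) \<le> prefix_sum l k" using prefix_sum_mono[OF l0, of "Suc j" k] k by simp
      then show False using k x by simp
    qed
    then show "i \<in> prefix_sum l ` {1..j}" using k by auto
  next
    fix i assume "i \<in> prefix_sum l ` {1..j}"
    then obtain k where k: "1 \<le> k" "k \<le> j" "i = prefix_sum l k" by auto
    have "prefix_sum l k \<le> prefix_sum l j" using prefix_sum_mono[OF l0, of k j] k j by simp
    then show "i \<in> {i\<in>block_starts (sum_list l) (path_E l). i \<le> x}"
      using block_starts_path_E[OF l0] k j x by auto
  qed
  moreover have "inj_on (prefix_sum l) {1..j}" by (rule inj_on_subset[OF prefix_sum_inj[OF l0]]) (use j in auto)
  ultimately show ?thesis unfolding block_index_def by (simp add: card_image)
qed

lemma prefix_sum_block_exists: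
  assumes l0: "0 \<notin> set l" and x: "x < sum_list l"
  shows "\<exists>j<length l. prefix_sum l j \<le> x \<and> x < prefix_sum l (Suc j)"
proof -
  let ?K = "{k. k \<le> length l \<and> prefix_sum l k \<le> x}"
  have fin: "finite ?K" by (rule finite_subset[of _ "{..length l}"]) auto
  have ne: "0 \<in> ?K" by simp
  define j where "j = Max ?K"
  have jK: "j \<in> ?K" unfolding j_def using fin ne by (intro Max_in) auto
  have jl: "j < length l"
  proof (rule ccontr)
    assume "\<not> j < length l"
    then have "j = length l" using jK by simp
    then show False using jK x prefix_sum_length[of l] by simp
  qed
  have "x < prefix_sum l (Suc j)"
  proof (rule ccontr)
    assume "\<not> x < prefix_sum l (Suc j)"
    then have "Suc j \<in> ?K" using jl by simp
    then have "Suc j \<le> j" unfolding j_def by (rule Max_ge[OF fin])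
    then show False by simp
  qed
  then show ?thesis using jK jl by blast
qed

lemma block_index_fibre_path_E:
  assumes l0: "0 \<notin> set l" and j: "j < length l"
  shows "{x\<in>{0..<sum_list l}. block_index (sum_list l) (path_E l) x = j} = {prefix_sum l j..<prefix_sum l (Suc j)}"
proof (rule set_eqI, rule iffI)
  fix x assume "x \<in> {x\<in>{0..<sum_list l}. block_index (sum_list l) (path_E l) x = j}"
  then have x: "x < sum_list l" "block_index (sum_list l) (path_E l) x = j" by auto
  obtain j' where j': "j' < length l" "prefix_sum l j' \<le> x" "x < prefix_sum l (Suc j')" using prefix_sum_block_exists[OF l0 x(1)] by blast
  then have "block_index (sum_list l) (path_E l) x = j'" by (intro block_index_path_E[OF l0]) auto
  then show "x \<in> {prefix_sum l j..<prefix_sum l (Suc j)}" using x j' by simp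
next
  fix x assume x: "x \<in> {prefix_sum l j..<prefix_sum l (Suc j)}"
  have "prefix_sum l (Suc j) \<le> sum_list l" using prefix_sum_mono[OF l0, of "Suc j" "length l"] j prefix_sum_length[of l] by simp
  then show "x \<in> {x\<in>{0..<sum_list l}. block_index (sum_list l) (path_E l) x = j}"
    using x block_index_path_E[OF l0 j, of x] by auto
qed

lemma card_path_E:
  assumes l0: "0 \<notin> set l"
  shows "card (path_E l) = sum_list l - length l"
proof (cases "l = []")
  case True then show ?thesis by (simp add: path_E_def)
next
  case False
  have n: "1 \<le> sum_list l" using prefix_sum_ge[OF l0, of "length l"] False prefix_sum_length[of l]
    by (metis One_nat_def Suc_leI length_greater_0_conv dual_order.trans le_refl)
  have "card (block_starts (sum_list l) (path_E l)) = length l - 1"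
  proof -
    have "inj_on (prefix_sum l) {1..<length l}" by (rule inj_on_subset[OF prefix_sum_inj[OF l0]]) auto
    then have "card (prefix_sum l ` {1..<length l}) = card {1..<length l}" by (rule card_image)
    then show ?thesis using block_starts_path_E[OF l0] by simp
  qed
  moreover have "length l \<le> sum_list l" using prefix_sum_ge[OF l0, of "length l"] prefix_sum_length[of l] by simp
  moreover have "1 \<le> length l" using False by (cases l) auto
  ultimately show ?thesis using card_add_card_block_starts[OF path_E_subset n] by linarith
qed

lemma block_sizes_path_E:
  assumes l0: "0 \<notin> set l"
  shows "block_sizes (sum_list l) (path_E l) = l"
proof (rule nth_equalityI)
  have "length l \<le> sum_list l" using prefix_sum_ge[OF l0, of "length l"] prefix_sum_length[of l] by simp
  then show len: "length (block_sizes (sum_list l) (path_E l)) = length l"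
    by (simp add: block_sizes_def fibre_sizes_def card_path_E[OF l0])
  fix j assume "j < length (block_sizes (sum_list l) (path_E l))"
  then have j: "j < length l" using len by simp
  have "block_sizes (sum_list l) (path_E l) ! j = card {x\<in>{0..<sum_list l}. block_index (sum_list l) (path_E l) x = j}"
    using j len by (simp add: block_sizes_def fibre_sizes_def)
  also have "\<dots> = prefix_sum l (Suc j) - prefix_sum l j" unfolding block_index_fibre_path_E[OF l0 j] by simp
  also have "\<dots> = l!j" using prefix_sum_Suc[OF j] by simp
  finally show "block_sizes (sum_list l) (path_E l) ! j = l!j" .
qed


section \<open>Inclusion--exclusion over monochromatic edges\<close>

definition monochromatic_count :: "'a set \<Rightarrow> 'a set set \<Rightarrow> (nat \<Rightarrow> nat) \<Rightarrow> nat" where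
  "monochromatic_count V S \<alpha> = card {\<kappa>\<in>typed_colourings V \<alpha>. \<forall>e\<in>S. \<forall>a\<in>e. \<forall>b\<in>e. \<kappa> a = \<kappa> b}"

lemma finite_typed_colourings:
  assumes fin: "finite V"
  shows "finite (typed_colourings V \<alpha>)"
proof (cases "typed_colourings V \<alpha> = {}")
  case True then show ?thesis by simp
next
  case False
  then obtain \<kappa>0 where k0: "\<kappa>0 \<in> typed_colourings V \<alpha>" by blast
  have supp: "{i. \<alpha> i \<noteq> 0} \<subseteq> \<kappa>0 ` V"
  proof
    fix i assume "i \<in> {i. \<alpha> i \<noteq> 0}"
    then have "card {x\<in>V. \<kappa>0 x = i} \<noteq> 0" using k0 by (simp add: typed_colourings_def)
    then have "{x\<in>V. \<kappa>0 x = i} \<noteq> {}" by (metis card.empty)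
    then show "i \<in> \<kappa>0 ` V" by blast
  qed
  show ?thesis
  proof (rule finite_subset)
    show "typed_colourings V \<alpha> \<subseteq> {f. \<forall>x. (x \<in> V \<longrightarrow> f x \<in> \<kappa>0 ` V) \<and> (x \<notin> V \<longrightarrow> f x = 0)}"
    proof
      fix \<kappa> assume k: "\<kappa> \<in> typed_colourings V \<alpha>"
      have "\<forall>x. (x \<in> V \<longrightarrow> \<kappa> x \<in> \<kappa>0 ` V) \<and> (x \<notin> V \<longrightarrow> \<kappa> x = 0)"
      proof (intro allI conjI impI)
        fix x assume x: "x \<in> V"
        have "card {y\<in>V. \<kappa> y = \<kappa> x} = \<alpha> (\<kappa> x)" using k by (simp add: typed_colourings_def)
        moreover have "card {y\<in>V. \<kappa> y = \<kappa> x} \<noteq> 0" using x fin by (auto simp: card_eq_0_iff)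
        ultimately have "\<kappa> x \<in> {i. \<alpha> i \<noteq> 0}" by simp
        then show "\<kappa> x \<in> \<kappa>0 ` V" using supp by blast
      next
        fix x assume "x \<notin> V" then show "\<kappa> x = 0" using k by (simp add: typed_colourings_def)
      qed
      then show "\<kappa> \<in> {f. \<forall>x. (x \<in> V \<longrightarrow> f x \<in> \<kappa>0 ` V) \<and> (x \<notin> V \<longrightarrow> f x = 0)}" by simp
    qed
    show "finite {f. \<forall>x. (x \<in> V \<longrightarrow> f x \<in> \<kappa>0 ` V) \<and> (x \<notin> V \<longrightarrow> f x = 0)}"
      by (rule finite_set_of_finite_funs) (use fin in auto)
  qed
qed

lemma sum_Pow_binomial:
  fixes y :: "'a::comm_ring_1"
  assumes "finite A"
  shows "(\<Sum>S\<in>Pow A. (-1)^card S * y^(card A - card S)) = (y - 1)^card A"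
  using assms
proof (induction A rule: finite_induct)
  case empty then show ?case by simp
next
  case (insert a A)
  let ?f = "\<lambda>S. (-1::'a)^card S * y^(card (insert a A) - card S)"
  have disj: "Pow A \<inter> insert a ` Pow A = {}" using insert.hyps by auto
  have inj: "inj_on (insert a) (Pow A)" using insert.hyps by (auto simp: inj_on_def)
  have "(\<Sum>S\<in>Pow (insert a A). ?f S) = (\<Sum>S\<in>Pow A. ?f S) + (\<Sum>S\<in>insert a ` Pow A. ?f S)"
    unfolding Pow_insert using insert.hyps disj by (intro sum.union_disjoint) auto
  also have "(\<Sum>S\<in>Pow A. ?f S) = (\<Sum>S\<in>Pow A. y * ((-1)^card S * y^(card A - card S)))"
  proof (rule sum.cong[OF refl])
    fix S assume "S \<in> Pow A"
    then have "card S \<le> card A" using insert.hyps by (auto intro: card_mono)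
    then have "card (insert a A) - card S = Suc (card A - card S)" using insert.hyps by simp
    then show "?f S = y * ((-1)^card S * y^(card A - card S))" by simp
  qed
  also have "(\<Sum>S\<in>insert a ` Pow A. ?f S) = (\<Sum>S\<in>Pow A. ?f (insert a S))"
    by (rule sum.reindex[OF inj, unfolded comp_def])
  also have "\<dots> = (\<Sum>S\<in>Pow A. - ((-1)^card S * y^(card A - card S)))"
  proof (rule sum.cong[OF refl])
    fix S assume S: "S \<in> Pow A"
    then have "finite S" "a \<notin> S" using insert.hyps by (auto intro: finite_subset)
    then have "card (insert a S) = Suc (card S)" by simp
    then show "?f (insert a S) = - ((-1)^card S * y^(card A - card S))" using insert.hyps by simp
  qed
  finally show ?case using insert.IH insert.hyps
    by (simp add: sum_distrib_left[symmetric] sum_negf algebra_simps)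
qed

lemma sum_Pow_sign:
  assumes "finite A"
  shows "(\<Sum>S\<in>Pow A. (-1::'a::comm_ring_1)^card S) = (if A = {} then 1 else 0)"
  using sum_Pow_binomial[OF assms, of 1] assms by (cases "A = {}") (simp_all add: zero_power card_gt_0_iff)

definition monochromatic_edges :: "'a set set \<Rightarrow> ('a \<Rightarrow> nat) \<Rightarrow> 'a set set" where
  "monochromatic_edges E \<kappa> = {e\<in>E. \<forall>a\<in>e. \<forall>b\<in>e. \<kappa> a = \<kappa> b}"

lemma proper_typed_colourings_eq:
  assumes c2: "\<forall>e\<in>E. card e = 2"
  shows "{\<kappa> \<in> proper_colourings V E. \<forall>i. card {x\<in>V. \<kappa> x = i} = \<alpha> i}
       = {\<kappa> \<in> typed_colourings V \<alpha>. monochromatic_edges E \<kappa> = {}}"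
proof -
  have edge: "(\<forall>x\<in>e. \<forall>y\<in>e. x \<noteq> y \<longrightarrow> \<kappa> x \<noteq> \<kappa> y) \<longleftrightarrow> \<not> (\<forall>a\<in>e. \<forall>b\<in>e. \<kappa> a = \<kappa> b)"
    if "e \<in> E" for e and \<kappa> :: "'a \<Rightarrow> nat"
  proof -
    have "card e = 2" using c2 that by blast
    then obtain p q where "e = {p, q}" "p \<noteq> q" unfolding card_2_iff by blast
    then show ?thesis by auto
  qed
  have "monochromatic_edges E \<kappa> = {} \<longleftrightarrow> (\<forall>e\<in>E. \<forall>x\<in>e. \<forall>y\<in>e. x \<noteq> y \<longrightarrow> \<kappa> x \<noteq> \<kappa> y)" for \<kappa>
  proof -
    have "monochromatic_edges E \<kappa> = {} \<longleftrightarrow> (\<forall>e\<in>E. \<not> (\<forall>a\<in>e. \<forall>b\<in>e. \<kappa> a = \<kappa> b))"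
      unfolding monochromatic_edges_def by blast
    also have "\<dots> \<longleftrightarrow> (\<forall>e\<in>E. \<forall>x\<in>e. \<forall>y\<in>e. x \<noteq> y \<longrightarrow> \<kappa> x \<noteq> \<kappa> y)"
      by (intro ball_cong refl) (simp only: edge)
    finally show ?thesis .
  qed
  then show ?thesis
    unfolding proper_colourings_def typed_colourings_def by blast
qed

lemma csf_inclusion_exclusion:
  assumes fin: "finite V" and finE: "finite E" and c2: "\<forall>e\<in>E. card e = 2"
  shows "csf V E \<alpha> = (\<Sum>S\<in>Pow E. (-1)^card S * of_nat (monochromatic_count V S \<alpha>))"
proof -
  let ?C = "typed_colourings V \<alpha>" and ?M = "monochromatic_edges E"
  have card_sum: "of_nat (card {\<kappa>\<in>?C. P \<kappa>}) = (\<Sum>\<kappa>\<in>?C. if P \<kappa> then 1 else (0::rat))" for P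
    using finite_typed_colourings[OF fin] by (simp add: sum.If_cases Int_def)
  have count: "monochromatic_count V S \<alpha> = card {\<kappa>\<in>?C. S \<subseteq> ?M \<kappa>}" if "S \<subseteq> E" for S
  proof -
    have "{\<kappa>\<in>?C. \<forall>e\<in>S. \<forall>a\<in>e. \<forall>b\<in>e. \<kappa> a = \<kappa> b} = {\<kappa>\<in>?C. S \<subseteq> ?M \<kappa>}"
      using that unfolding monochromatic_edges_def by auto
    then show ?thesis by (simp add: monochromatic_count_def)
  qed
  have sign: "(\<Sum>S\<in>Pow E. (-1)^card S * (if S \<subseteq> ?M \<kappa> then 1 else (0::rat)))
      = (if ?M \<kappa> = {} then 1 else 0)" for \<kappa>
  proof -
    have ME: "?M \<kappa> \<subseteq> E" by (auto simp: monochromatic_edges_def)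
    have "(\<Sum>S\<in>Pow E. (-1)^card S * (if S \<subseteq> ?M \<kappa> then 1 else (0::rat)))
        = (\<Sum>S\<in>Pow E. if S \<in> Pow (?M \<kappa>) then (-1)^card S else 0)"
      by (rule sum.cong) auto
    also have "\<dots> = (\<Sum>S\<in>Pow E \<inter> Pow (?M \<kappa>). (-1)^card S)"
      by (rule sum.inter_restrict[symmetric]) (use finE in simp)
    also have "Pow E \<inter> Pow (?M \<kappa>) = Pow (?M \<kappa>)" using ME by auto
    also have "(\<Sum>S\<in>Pow (?M \<kappa>). (-1::rat)^card S) = (if ?M \<kappa> = {} then 1 else 0)"
      by (rule sum_Pow_sign) (use ME finE in \<open>auto intro: finite_subset\<close>)
    finally show ?thesis .
  qed
  have "(\<Sum>S\<in>Pow E. (-1)^card S * of_nat (monochromatic_count V S \<alpha>))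
      = (\<Sum>S\<in>Pow E. \<Sum>\<kappa>\<in>?C. (-1)^card S * (if S \<subseteq> ?M \<kappa> then 1 else (0::rat)))"
    by (rule sum.cong[OF refl]) (simp add: count card_sum sum_distrib_left)
  also have "\<dots> = (\<Sum>\<kappa>\<in>?C. \<Sum>S\<in>Pow E. (-1)^card S * (if S \<subseteq> ?M \<kappa> then 1 else (0::rat)))"
    by (rule sum.swap)
  also have "\<dots> = (\<Sum>\<kappa>\<in>?C. if ?M \<kappa> = {} then 1 else 0)"
    by (rule sum.cong[OF refl]) (rule sign)
  also have "\<dots> = of_nat (card {\<kappa>\<in>?C. ?M \<kappa> = {}})" by (simp add: card_sum)
  also have "\<dots> = csf V E \<alpha>" by (simp add: csf_def proper_typed_colourings_eq[OF c2])
  finally show ?thesis by simp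
qed

lemma monochromatic_count_path_edges:
  assumes S: "S \<subseteq> path_edges n"
  shows "monochromatic_count {0..<n} S \<alpha> = power_sum (block_sizes n S) \<alpha>"
proof -
  have "{\<kappa>\<in>typed_colourings {0..<n} \<alpha>. \<forall>e\<in>S. \<forall>a\<in>e. \<forall>b\<in>e. \<kappa> a = \<kappa> b}
      = {\<kappa>\<in>typed_colourings {0..<n} \<alpha>.
          \<forall>x\<in>{0..<n}. \<forall>y\<in>{0..<n}. block_index n S x = block_index n S y \<longrightarrow> \<kappa> x = \<kappa> y}"
    using constant_on_edges_iff_block_constant[OF S] by blast
  then show ?thesis
    unfolding monochromatic_count_def block_sizes_def
    using card_block_constant_colourings[OF _ block_index_image[OF S]] by simp
qed

lemma finite_image_indexing:
  assumes "finite V"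
  obtains b :: "'a \<Rightarrow> nat" and r where "b ` V = {0..<r}"
    "\<And>x y. x \<in> V \<Longrightarrow> y \<in> V \<Longrightarrow> b x = b y \<longleftrightarrow> h x = h y"
proof -
  obtain g where g: "bij_betw g {0..<card (h ` V)} (h ` V)"
    using ex_bij_betw_nat_finite[of "h ` V"] assms by blast
  define b where "b x = inv_into {0..<card (h ` V)} g (h x)" for x
  have inv: "bij_betw (inv_into {0..<card (h ` V)} g) (h ` V) {0..<card (h ` V)}"
    by (rule bij_betw_inv_into[OF g])
  have "b ` V = {0..<card (h ` V)}"
    using bij_betw_imp_surj_on[OF inv] by (simp add: b_def image_image[symmetric])
  moreover have "b x = b y \<longleftrightarrow> h x = h y" if "x \<in> V" "y \<in> V" for x y
    using bij_betw_imp_inj_on[OF inv] that by (auto simp: b_def dest: inj_onD)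
  ultimately show ?thesis by (rule that)
qed

text \<open>\<open>x\<close> and \<open>y\<close> lie in the same connected component of \<open>(V, S)\<close>.\<close>

definition glued :: "'a set set \<Rightarrow> 'a \<Rightarrow> 'a \<Rightarrow> bool" where
  "glued S x y \<longleftrightarrow> (\<forall>\<kappa>::'a\<Rightarrow>nat. (\<forall>e\<in>S. \<forall>a\<in>e. \<forall>b\<in>e. \<kappa> a = \<kappa> b) \<longrightarrow> \<kappa> x = \<kappa> y)"

lemma glued_refl: "glued S x x"
  unfolding glued_def by simp

lemma glued_sym: "glued S x y \<Longrightarrow> glued S y x"
  unfolding glued_def by metis

lemma glued_trans: "glued S x y \<Longrightarrow> glued S y z \<Longrightarrow> glued S x z"
  unfolding glued_def by metis

lemma glued_if_edge: "e \<in> S \<Longrightarrow> x \<in> e \<Longrightarrow> y \<in> e \<Longrightarrow> glued S x y"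
  unfolding glued_def by blast

lemma glued_imp_eq:
  fixes \<kappa> :: "'a \<Rightarrow> nat"
  assumes "glued S x y" "\<forall>e\<in>S. \<forall>a\<in>e. \<forall>a'\<in>e. \<kappa> a = \<kappa> a'"
  shows "\<kappa> x = \<kappa> y"
  using assms unfolding glued_def by blast

lemma monochromatic_count_eq_power_sum:
  assumes fin: "finite V" and SV: "\<forall>e\<in>S. e \<subseteq> V"
  obtains c where "0 \<notin> set c" "sum_list c = card V" "\<And>\<alpha>. monochromatic_count V S \<alpha> = power_sum c \<alpha>"
proof -
  obtain b :: "'a \<Rightarrow> nat" and r where bV: "b ` V = {0..<r}"
    and b: "\<And>x y. x \<in> V \<Longrightarrow> y \<in> V \<Longrightarrow> b x = b y \<longleftrightarrow> {z\<in>V. glued S x z} = {z\<in>V. glued S y z}"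
    using finite_image_indexing[OF fin, where h="\<lambda>x. {z\<in>V. glued S x z}"] by blast
  have b_glued: "b x = b y \<longleftrightarrow> glued S x y" if "x \<in> V" "y \<in> V" for x y
  proof
    assume "b x = b y"
    then have "{z\<in>V. glued S x z} = {z\<in>V. glued S y z}" using b[OF that] by simp
    moreover have "y \<in> {z\<in>V. glued S y z}" using that glued_refl by simp
    ultimately show "glued S x y" by blast
  next
    assume "glued S x y"
    then have "{z\<in>V. glued S x z} = {z\<in>V. glued S y z}" using glued_sym glued_trans by metis
    then show "b x = b y" using b[OF that] by simp
  qed
  have "(\<forall>e\<in>S. \<forall>a\<in>e. \<forall>a'\<in>e. \<kappa> a = \<kappa> a') \<longleftrightarrow> (\<forall>x\<in>V. \<forall>y\<in>V. b x = b y \<longrightarrow> \<kappa> x = \<kappa> y)"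
    for \<kappa> :: "'a \<Rightarrow> nat"
  proof
    assume H: "\<forall>e\<in>S. \<forall>a\<in>e. \<forall>a'\<in>e. \<kappa> a = \<kappa> a'"
    show "\<forall>x\<in>V. \<forall>y\<in>V. b x = b y \<longrightarrow> \<kappa> x = \<kappa> y"
    proof (intro ballI impI)
      fix x y assume "x \<in> V" "y \<in> V" "b x = b y"
      then have "glued S x y" using b_glued by blast
      then show "\<kappa> x = \<kappa> y" using H by (rule glued_imp_eq)
    qed
  next
    assume H: "\<forall>x\<in>V. \<forall>y\<in>V. b x = b y \<longrightarrow> \<kappa> x = \<kappa> y"
    show "\<forall>e\<in>S. \<forall>a\<in>e. \<forall>a'\<in>e. \<kappa> a = \<kappa> a'"
    proof (intro ballI)
      fix e a a' assume e: "e \<in> S" "a \<in> e" "a' \<in> e"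
      then have "a \<in> V" "a' \<in> V" using SV by auto
      moreover have "glued S a a'" using e by (rule glued_if_edge)
      ultimately show "\<kappa> a = \<kappa> a'" using H b_glued by blast
    qed
  qed
  then have "monochromatic_count V S \<alpha> = power_sum (fibre_sizes V b r) \<alpha>" for \<alpha>
    unfolding monochromatic_count_def card_block_constant_colourings[OF fin bV, symmetric] by simp
  with fibre_sizes_props(2,3)[OF fin bV] show ?thesis by (rule that)
qed

section \<open>The path basis\<close>

abbreviation path_csf :: "nat list \<Rightarrow> (nat \<Rightarrow> nat) \<Rightarrow> rat" where
  "path_csf l \<equiv> csf (path_V l) (path_E l)"

lemma partitionsD:
  assumes "l \<in> partitions n"
  shows "0 \<notin> set l" "sum_list l = n" "sorted_wrt (\<ge>) l"
  using assms by (auto simp: partitions_def)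

lemma length_partition_le: "l \<in> partitions n \<Longrightarrow> length l \<le> n"
  using prefix_sum_ge[of l "length l"] prefix_sum_length[of l] partitionsD[of l n] by auto

lemma finite_partitions: "finite (partitions n)"
proof (rule finite_subset)
  show "partitions n \<subseteq> {xs. set xs \<subseteq> {0..n} \<and> length xs \<le> n}"
  proof
    fix l assume l: "l \<in> partitions n"
    have "set l \<subseteq> {0..n}" using member_le_sum_list[of _ l] partitionsD(2)[OF l] by auto
    then show "l \<in> {xs. set xs \<subseteq> {0..n} \<and> length xs \<le> n}" using length_partition_le[OF l] by simp
  qed
  show "finite {xs. set xs \<subseteq> {0..n} \<and> length xs \<le> n}" by (rule finite_lists_length_le) simp
qed

definition sort_desc :: "nat list \<Rightarrow> nat list" where "sort_desc c = rev (sort c)"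

abbreviation block_type :: "nat \<Rightarrow> nat set set \<Rightarrow> nat list" where
  "block_type n S \<equiv> sort_desc (block_sizes n S)"

lemma sort_desc_props: "mset (sort_desc c) = mset c" "length (sort_desc c) = length c"
  by (simp_all add: sort_desc_def)

lemma sort_desc_partition:
  assumes "0 \<notin> set c" "sum_list c = n"
  shows "sort_desc c \<in> partitions n"
proof -
  have "sorted_wrt (\<ge>) (sort_desc c)" by (simp add: sort_desc_def sorted_wrt_rev)
  moreover have "set (sort_desc c) = set c" by (simp add: sort_desc_def)
  moreover have "sum_list (sort_desc c) = sum_list c" by (metis mset_rev mset_sort sort_desc_def sum_mset_sum_list)
  ultimately show ?thesis using assms by (simp add: partitions_def)
qed

lemma sort_desc_partition_id: "l \<in> partitions n \<Longrightarrow> sort_desc l = l"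
proof -
  assume l: "l \<in> partitions n"
  have "sorted_wrt (\<ge>) (sort_desc l)" by (simp add: sort_desc_def sorted_wrt_rev)
  then show "sort_desc l = l" using sorted_desc_eq partitionsD(3)[OF l] sort_desc_props(1) by blast
qed

lemma power_sum_sort_desc: "power_sum (sort_desc c) \<alpha> = power_sum c \<alpha>"
  by (rule power_sum_mset_eq) (simp add: sort_desc_props)

lemma path_V_eq: "l \<in> partitions n \<Longrightarrow> path_V l = {0..<n}"
  using partitionsD(2) by (simp add: path_V_def)

lemma card_path_E_edge: "\<forall>e\<in>path_E l. card e = 2"
  by (auto simp: path_E_def)

lemma finite_path_E: "finite (path_E l)"
  using finite_subset[OF path_E_subset finite_path_edges] .

lemma path_csf_expansion:
  assumes l: "l \<in> partitions n"
  shows "path_csf l \<alpha> = (\<Sum>S\<in>Pow (path_E l). (-1)^card S * of_nat (power_sum (block_type n S) \<alpha>))"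
proof -
  have "path_csf l \<alpha> = (\<Sum>S\<in>Pow (path_E l). (-1)^card S * of_nat (monochromatic_count {0..<n} S \<alpha>))"
    using csf_inclusion_exclusion[OF _ finite_path_E card_path_E_edge] path_V_eq[OF l] by simp
  also have "\<dots> = (\<Sum>S\<in>Pow (path_E l). (-1)^card S * of_nat (power_sum (block_type n S) \<alpha>))"
  proof (rule sum.cong[OF refl])
    fix S assume "S \<in> Pow (path_E l)"
    then have "S \<subseteq> path_edges n" using path_E_subset[of l] partitionsD(2)[OF l] by auto
    then show "(-1)^card S * of_nat (monochromatic_count {0..<n} S \<alpha>) = (-1)^card S * of_nat (power_sum (block_type n S) \<alpha>)"
      by (simp add: monochromatic_count_path_edges power_sum_sort_desc)
  qed
  finally show ?thesis .
qed

lemma path_subgraph_type: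
  assumes l: "l \<in> partitions n" and S: "S \<subseteq> path_E l"
  shows "block_type n S \<in> partitions n" "length (block_type n S) = n - card S"
proof -
  have "S \<subseteq> path_edges n" using S path_E_subset[of l] partitionsD(2)[OF l] by auto
  then show "block_type n S \<in> partitions n" "length (block_type n S) = n - card S"
    using block_sizes_props[of S n] sort_desc_partition sort_desc_props by auto
qed

lemma path_E_type:
  assumes l: "l \<in> partitions n"
  shows "block_type n (path_E l) = l" "card (path_E l) = n - length l"
  using block_sizes_path_E[OF partitionsD(1)[OF l]] card_path_E[OF partitionsD(1)[OF l]]
    partitionsD(2)[OF l] sort_desc_partition_id[OF l] by auto

definition in_path_span :: "nat \<Rightarrow> ((nat \<Rightarrow> nat) \<Rightarrow> rat) \<Rightarrow> bool" where
  "in_path_span n F \<longleftrightarrow> (\<exists>a. \<forall>\<alpha>. F \<alpha> = (\<Sum>l\<in>partitions n. a l * path_csf l \<alpha>))"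

lemma in_path_span_path_csf: "l \<in> partitions n \<Longrightarrow> in_path_span n (path_csf l)"
  unfolding in_path_span_def
  by (rule exI[of _ "\<lambda>l'. if l' = l then 1 else 0"])
     (simp add: if_distrib[of "\<lambda>x. x * _"] sum.delta[OF finite_partitions] cong: if_cong)

lemma in_path_span_zero: "in_path_span n (\<lambda>_. 0)"
  unfolding in_path_span_def by (rule exI[of _ "\<lambda>_. 0"]) simp

lemma in_path_span_add: "in_path_span n F \<Longrightarrow> in_path_span n G \<Longrightarrow> in_path_span n (\<lambda>\<alpha>. F \<alpha> + G \<alpha>)"
proof -
  assume "in_path_span n F" "in_path_span n G"
  then obtain a b where a: "\<And>\<alpha>. F \<alpha> = (\<Sum>l\<in>partitions n. a l * path_csf l \<alpha>)"
    and b: "\<And>\<alpha>. G \<alpha> = (\<Sum>l\<in>partitions n. b l * path_csf l \<alpha>)" unfolding in_path_span_def by blast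
  show ?thesis unfolding in_path_span_def
    by (rule exI[of _ "\<lambda>l. a l + b l"]) (simp add: a b sum.distrib distrib_right)
qed

lemma in_path_span_scale: "in_path_span n F \<Longrightarrow> in_path_span n (\<lambda>\<alpha>. c * F \<alpha>)"
proof -
  assume "in_path_span n F"
  then obtain a where a: "\<And>\<alpha>. F \<alpha> = (\<Sum>l\<in>partitions n. a l * path_csf l \<alpha>)" unfolding in_path_span_def by blast
  show ?thesis unfolding in_path_span_def
    by (rule exI[of _ "\<lambda>l. c * a l"]) (simp add: a sum_distrib_left mult.assoc)
qed

lemma in_path_span_sum: "finite I \<Longrightarrow> (\<And>i. i \<in> I \<Longrightarrow> in_path_span n (F i)) \<Longrightarrow> in_path_span n (\<lambda>\<alpha>. \<Sum>i\<in>I. F i \<alpha>)"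
proof (induction I rule: finite_induct)
  case empty then show ?case by (simp add: in_path_span_zero)
next
  case (insert x I)
  then have "in_path_span n (\<lambda>\<alpha>. F x \<alpha> + (\<Sum>i\<in>I. F i \<alpha>))" by (intro in_path_span_add) auto
  then show ?case using insert.hyps by simp
qed

lemma path_csf_leading_term:
  assumes \<nu>: "\<nu> \<in> partitions n"
  shows "path_csf \<nu> \<alpha> = (-1)^(n - length \<nu>) * of_nat (power_sum \<nu> \<alpha>)
    + (\<Sum>S\<in>Pow (path_E \<nu>) - {path_E \<nu>}. (-1)^card S * of_nat (power_sum (block_type n S) \<alpha>))"
proof -
  have "path_csf \<nu> \<alpha> = (-1)^card (path_E \<nu>) * of_nat (power_sum (block_type n (path_E \<nu>)) \<alpha>)
      + (\<Sum>S\<in>Pow (path_E \<nu>) - {path_E \<nu>}. (-1)^card S * of_nat (power_sum (block_type n S) \<alpha>))"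
    unfolding path_csf_expansion[OF \<nu>] by (rule sum.remove) (use finite_path_E in auto)
  then show ?thesis using path_E_type[OF \<nu>] by simp
qed

lemma power_sum_in_path_span:
  assumes "\<nu> \<in> partitions n"
  shows "in_path_span n (\<lambda>\<alpha>. of_nat (power_sum \<nu> \<alpha>))"
  using assms
proof (induction "n - length \<nu>" arbitrary: \<nu> rule: less_induct)
  case less
  note \<nu> = less.prems
  let ?E = "path_E \<nu>"
  let ?rest = "\<lambda>\<alpha>. \<Sum>S\<in>Pow ?E - {?E}. (-1)^card S * of_nat (power_sum (block_type n S) \<alpha>) :: rat"
  have "in_path_span n ?rest"
  proof (rule in_path_span_sum)
    fix S assume "S \<in> Pow ?E - {?E}"
    then have SE: "S \<subseteq> ?E" "S \<noteq> ?E" by auto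
    then have "card S < card ?E" using finite_path_E by (meson psubsetI psubset_card_mono)
    then have "n - length (block_type n S) < n - length \<nu>"
      using path_subgraph_type(2)[OF \<nu> SE(1)] path_E_type(2)[OF \<nu>] length_partition_le[OF \<nu>] by simp
    then have "in_path_span n (\<lambda>\<alpha>. of_nat (power_sum (block_type n S) \<alpha>))"
      using less.hyps path_subgraph_type(1)[OF \<nu> SE(1)] by blast
    then show "in_path_span n (\<lambda>\<alpha>. (-1)^card S * of_nat (power_sum (block_type n S) \<alpha>))"
      by (rule in_path_span_scale)
  qed (use finite_path_E in simp)
  then have "in_path_span n (\<lambda>\<alpha>. (-1)^(n - length \<nu>) * (path_csf \<nu> \<alpha> + (-1) * ?rest \<alpha>))"
    by (intro in_path_span_scale in_path_span_add in_path_span_path_csf[OF \<nu>])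
  moreover have "(-1)^(n - length \<nu>) * (path_csf \<nu> \<alpha> + (-1) * ?rest \<alpha>) = of_nat (power_sum \<nu> \<alpha>)" for \<alpha>
  proof -
    have "(-1::rat)^(n - length \<nu>) * (-1)^(n - length \<nu>) = 1" by (simp add: power_mult_distrib[symmetric])
    then show ?thesis unfolding path_csf_leading_term[OF \<nu>] by (simp add: algebra_simps)
  qed
  ultimately show ?case by simp
qed

lemma csf_in_path_span:
  assumes G: "simple_graph V E"
  shows "in_path_span (card V) (csf V E)"
proof -
  have fin: "finite V" and Ee: "\<forall>e\<in>E. e \<subseteq> V \<and> card e = 2" using G by (auto simp: simple_graph_def)
  have finE: "finite E" using fin Ee by (meson Pow_iff finite_Pow_iff finite_subset subsetI)
  have "in_path_span (card V) (\<lambda>\<alpha>. \<Sum>S\<in>Pow E. (-1)^card S * of_nat (monochromatic_count V S \<alpha>))"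
  proof (rule in_path_span_sum)
    show "finite (Pow E)" using finE by simp
  next
    fix S assume "S \<in> Pow E"
    then have "\<forall>e\<in>S. e \<subseteq> V" using Ee by auto
    then obtain c where c: "0 \<notin> set c" "sum_list c = card V" "\<And>\<alpha>. monochromatic_count V S \<alpha> = power_sum c \<alpha>"
      using monochromatic_count_eq_power_sum[OF fin] by blast
    have "in_path_span (card V) (\<lambda>\<alpha>. of_nat (power_sum (sort_desc c) \<alpha>))" by (rule power_sum_in_path_span[OF sort_desc_partition[OF c(1,2)]])
    then have "in_path_span (card V) (\<lambda>\<alpha>. of_nat (monochromatic_count V S \<alpha>))" by (simp add: c(3) power_sum_sort_desc)
    then show "in_path_span (card V) (\<lambda>\<alpha>. (-1)^card S * of_nat (monochromatic_count V S \<alpha>))" by (rule in_path_span_scale)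
  qed
  moreover have "csf V E = (\<lambda>\<alpha>. \<Sum>S\<in>Pow E. (-1)^card S * of_nat (monochromatic_count V S \<alpha>))"
    using csf_inclusion_exclusion[OF fin finE] Ee by (simp add: fun_eq_iff)
  ultimately show ?thesis by simp
qed


text \<open>The coefficient of \<open>p\<^sub>\<nu>\<close> in the power-sum expansion of \<open>X\<^bsub>P\<^sub>l\<^esub>\<close>.\<close>

definition path_power_coeff :: "nat \<Rightarrow> nat list \<Rightarrow> nat list \<Rightarrow> rat" where
  "path_power_coeff n l \<nu> = (\<Sum>S\<in>{S\<in>Pow (path_E l). block_type n S = \<nu>}. (-1)^card S)"

lemma path_csf_grouped:
  assumes l: "l \<in> partitions n"
  shows "path_csf l \<alpha> = (\<Sum>\<nu>\<in>partitions n. path_power_coeff n l \<nu> * of_nat (power_sum \<nu> \<alpha>))"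
proof -
  let ?A = "Pow (path_E l)"
  have "path_csf l \<alpha> = (\<Sum>S\<in>?A. (-1)^card S * of_nat (power_sum (block_type n S) \<alpha>))"
    by (rule path_csf_expansion[OF l])
  also have "\<dots> = (\<Sum>\<nu>\<in>partitions n. \<Sum>S\<in>{S\<in>?A. block_type n S = \<nu>}. (-1)^card S * of_nat (power_sum (block_type n S) \<alpha>))"
    by (rule sum.group[symmetric]) (use finite_path_E finite_partitions path_subgraph_type(1)[OF l] in auto)
  also have "\<dots> = (\<Sum>\<nu>\<in>partitions n. path_power_coeff n l \<nu> * of_nat (power_sum \<nu> \<alpha>))"
    by (rule sum.cong[OF refl]) (simp add: path_power_coeff_def sum_distrib_right)
  finally show ?thesis .
qed

lemma eq_path_E_if_short_type:
  assumes l: "l \<in> partitions n" and SE: "S \<subseteq> path_E l" and len: "length (block_type n S) \<le> length l"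
  shows "S = path_E l"
proof -
  have "length (block_type n S) = n - card S" using path_subgraph_type(2)[OF l SE] .
  moreover have "card S \<le> card (path_E l)" using SE finite_path_E by (rule card_mono[rotated])
  moreover have "card (path_E l) = n - length l" using path_E_type(2)[OF l] .
  moreover have "length l \<le> n" using length_partition_le[OF l] .
  ultimately have "card S = card (path_E l)" using len by linarith
  then show ?thesis using card_subset_eq[OF finite_path_E SE] by simp
qed

lemma path_power_coeff_triangular:
  assumes l: "l \<in> partitions n" and len: "length \<nu> \<le> length l"
  shows "path_power_coeff n l \<nu> = (if \<nu> = l then (-1)^card (path_E l) else 0)"
proof -
  have "S = path_E l \<and> \<nu> = l" if "S \<subseteq> path_E l" "block_type n S = \<nu>" for S
    using eq_path_E_if_short_type[OF l] path_E_type(1)[OF l] that len by blast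
  then have "{S\<in>Pow (path_E l). block_type n S = \<nu>} = (if \<nu> = l then {path_E l} else {})"
    using path_E_type(1)[OF l] by auto
  then show ?thesis by (simp add: path_power_coeff_def)
qed

text \<open>Dual triangularity: at a shortest \<open>l\<close> with nonzero coefficient, \<open>p\<^sub>l\<close> occurs only in
  \<open>X\<^bsub>P\<^sub>l\<^esub>\<close>.\<close>

lemma path_csfs_independent:
  assumes z: "\<And>\<alpha>. (\<Sum>l\<in>partitions n. d l * path_csf l \<alpha>) = 0"
  shows "\<forall>l\<in>partitions n. d l = 0"
proof (rule ccontr)
  let ?P = "partitions n"
  define B where "B \<nu> = (\<Sum>l\<in>?P. d l * path_power_coeff n l \<nu>)" for \<nu>
  have "(\<Sum>\<nu>\<in>?P. B \<nu> * of_nat (power_sum \<nu> \<alpha>)) = 0" for \<alpha>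
  proof -
    have "(\<Sum>\<nu>\<in>?P. B \<nu> * of_nat (power_sum \<nu> \<alpha>))
        = (\<Sum>l\<in>?P. \<Sum>\<nu>\<in>?P. d l * (path_power_coeff n l \<nu> * of_nat (power_sum \<nu> \<alpha>)))"
      unfolding B_def sum_distrib_right by (subst sum.swap) (simp only: mult.assoc)
    also have "\<dots> = (\<Sum>l\<in>?P. d l * path_csf l \<alpha>)"
      by (simp add: path_csf_grouped sum_distrib_left)
    finally show ?thesis using z by simp
  qed
  then have B0: "\<forall>\<nu>\<in>?P. B \<nu> = 0"
    by (intro power_sums_independent[OF finite_partitions]) (auto dest: partitionsD)
  assume "\<not> (\<forall>l\<in>?P. d l = 0)"
  then obtain l0 where l0: "l0 \<in> ?P" "d l0 \<noteq> 0"
    and min: "\<And>l. l \<in> ?P \<Longrightarrow> d l \<noteq> 0 \<Longrightarrow> length l0 \<le> length l"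
    using ex_has_least_nat[of "\<lambda>l. l \<in> ?P \<and> d l \<noteq> 0" _ length] by blast
  have "d l * path_power_coeff n l l0 = (if l = l0 then d l0 * (-1)^card (path_E l0) else 0)"
    if "l \<in> ?P" for l
    using path_power_coeff_triangular[OF that, of l0] min[OF that] by (cases "d l = 0") auto
  then have "B l0 = d l0 * (-1)^card (path_E l0)"
    unfolding B_def using l0(1) by (simp add: sum.delta[OF finite_partitions] cong: sum.cong)
  then show False using B0 l0 by simp
qed

lemma path_csf_expansion_unique:
  assumes a0: "\<forall>\<mu>. \<mu> \<notin> partitions n \<longrightarrow> a \<mu> = 0" and b0: "\<forall>\<mu>. \<mu> \<notin> partitions n \<longrightarrow> b \<mu> = 0"
    and eq: "\<And>\<alpha>. (\<Sum>p\<in>partitions n. a p * path_csf p \<alpha>) = (\<Sum>p\<in>partitions n. b p * path_csf p \<alpha>)"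
  shows "a = b"
proof -
  have "(\<Sum>p\<in>partitions n. (a p - b p) * path_csf p \<alpha>) = 0" for \<alpha>
    using eq[of \<alpha>] by (simp add: left_diff_distrib sum_subtractf)
  then have "\<forall>p\<in>partitions n. a p - b p = 0" by (rule path_csfs_independent)
  then show ?thesis using a0 b0 by (metis eq_iff_diff_eq_0 ext)
qed

lemma path_coeffs_expansion:
  assumes G: "simple_graph V E"
  shows "(\<forall>\<mu>. \<mu> \<notin> partitions (card V) \<longrightarrow> path_coeffs V E \<mu> = 0) \<and>
      (\<forall>\<alpha>. csf V E \<alpha> = (\<Sum>p\<in>partitions (card V). path_coeffs V E p * path_csf p \<alpha>))"
proof -
  let ?P = "partitions (card V)"
  let ?Q = "\<lambda>a. (\<forall>\<mu>. \<mu> \<notin> ?P \<longrightarrow> a \<mu> = 0) \<and> (\<forall>\<alpha>. csf V E \<alpha> = (\<Sum>p\<in>?P. a p * path_csf p \<alpha>))"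
  obtain a where a: "\<And>\<alpha>. csf V E \<alpha> = (\<Sum>p\<in>?P. a p * path_csf p \<alpha>)"
    using csf_in_path_span[OF G] unfolding in_path_span_def by blast
  have "?Q (\<lambda>\<mu>. if \<mu> \<in> ?P then a \<mu> else 0)" by (simp add: a)
  moreover have "b = b'" if "?Q b" "?Q b'" for b b'
    using that by (intro path_csf_expansion_unique[of "card V"]) auto
  ultimately have "\<exists>!a. ?Q a" by (rule ex_ex1I[OF exI])
  then have "?Q (THE a. ?Q a)" by (rule theI')
  then show ?thesis unfolding path_coeffs_def .
qed


section \<open>The chromatic polynomial\<close>

definition bounded_types :: "nat \<Rightarrow> nat \<Rightarrow> (nat \<Rightarrow> nat) set" where
  "bounded_types N m = {\<alpha>. \<forall>i. (i \<in> {..m} \<longrightarrow> \<alpha> i \<in> {..N}) \<and> (i \<notin> {..m} \<longrightarrow> \<alpha> i = 0)}"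

lemma finite_bounded_types: "finite (bounded_types N m)"
  unfolding bounded_types_def by (rule finite_set_of_finite_funs) auto

definition chromatic_count :: "'a set \<Rightarrow> 'a set set \<Rightarrow> nat \<Rightarrow> nat" where
  "chromatic_count V E m = card {\<kappa>\<in>proper_colourings V E. \<forall>x. \<kappa> x \<le> m}"

lemma finite_bounded_colourings:
  assumes "finite V"
  shows "finite {\<kappa>\<in>proper_colourings V E. \<forall>x. \<kappa> x \<le> m}"
proof (rule finite_subset)
  show "{\<kappa>\<in>proper_colourings V E. \<forall>x. \<kappa> x \<le> m}
      \<subseteq> {f. \<forall>x. (x \<in> V \<longrightarrow> f x \<in> {..m}) \<and> (x \<notin> V \<longrightarrow> f x = 0)}"
    by (auto simp: proper_colourings_def)
  show "finite {f. \<forall>x. (x \<in> V \<longrightarrow> f x \<in> {..m}) \<and> (x \<notin> V \<longrightarrow> f x = 0)}"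
    by (rule finite_set_of_finite_funs) (use assms in auto)
qed

lemma colour_class_sizes_bounded:
  assumes fin: "finite V" and \<kappa>: "\<forall>x. \<kappa> x \<le> m"
  shows "(\<lambda>i. card {x\<in>V. \<kappa> x = i}) \<in> bounded_types (card V) m"
proof -
  have "card {x\<in>V. \<kappa> x = i} \<le> card V" for i using fin by (auto intro: card_mono)
  moreover have "card {x\<in>V. \<kappa> x = i} = 0" if "i \<notin> {..m}" for i
  proof -
    have "{x\<in>V. \<kappa> x = i} = {}" using \<kappa> that by force
    then show ?thesis by (simp only: card.empty)
  qed
  ultimately show ?thesis by (simp add: bounded_types_def)
qed

lemma bounded_if_colour_class_sizes_bounded:
  assumes fin: "finite V" and \<kappa>: "\<kappa> \<in> proper_colourings V E"
    and \<alpha>: "\<alpha> \<in> bounded_types (card V) m" and sizes: "\<forall>i. card {x\<in>V. \<kappa> x = i} = \<alpha> i"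
  shows "\<kappa> x \<le> m"
proof (cases "x \<in> V")
  case True
  have "card {y\<in>V. \<kappa> y = \<kappa> x} \<noteq> 0" using True fin by (auto simp: card_eq_0_iff)
  then have "\<alpha> (\<kappa> x) \<noteq> 0" using sizes by simp
  moreover have "\<kappa> x \<notin> {..m} \<longrightarrow> \<alpha> (\<kappa> x) = 0" using \<alpha> by (simp add: bounded_types_def)
  ultimately show ?thesis by auto
next
  case False then show ?thesis using \<kappa> by (simp add: proper_colourings_def)
qed

lemma chromatic_count_sum_csf:
  assumes fin: "finite V"
  shows "of_nat (chromatic_count V E m) = (\<Sum>\<alpha>\<in>bounded_types (card V) m. csf V E \<alpha>)"
proof -
  let ?T = "{\<kappa>\<in>proper_colourings V E. \<forall>x. \<kappa> x \<le> m}"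
  let ?sz = "\<lambda>\<kappa> i. card {x\<in>V. \<kappa> x = i}"
  have "card ?T = (\<Sum>\<alpha>\<in>bounded_types (card V) m. card {\<kappa>\<in>?T. ?sz \<kappa> = \<alpha>})"
    by (rule card_eq_sum_card_fibres[OF finite_bounded_colourings[OF fin] finite_bounded_types])
      (use colour_class_sizes_bounded[OF fin] in blast)
  also have "\<dots> = (\<Sum>\<alpha>\<in>bounded_types (card V) m.
      card {\<kappa> \<in> proper_colourings V E. \<forall>i. card {x\<in>V. \<kappa> x = i} = \<alpha> i})"
  proof (rule sum.cong[OF refl], rule arg_cong[where f=card])
    fix \<alpha> assume "\<alpha> \<in> bounded_types (card V) m"
    then show "{\<kappa>\<in>?T. ?sz \<kappa> = \<alpha>} = {\<kappa> \<in> proper_colourings V E. \<forall>i. card {x\<in>V. \<kappa> x = i} = \<alpha> i}"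
      using bounded_if_colour_class_sizes_bounded[OF fin] by (auto simp: fun_eq_iff)
  qed
  finally show ?thesis unfolding chromatic_count_def csf_def by simp
qed

definition colour_assignments :: "nat \<Rightarrow> nat \<Rightarrow> (nat \<Rightarrow> nat) set" where
  "colour_assignments l m = {f. (\<forall>j<l. 1 \<le> f j \<and> f j \<le> m) \<and> (\<forall>j. l \<le> j \<longrightarrow> f j = 0)}"

lemma finite_colour_assignments: "finite (colour_assignments l m)"
proof (rule finite_subset)
  show "colour_assignments l m \<subseteq> {f. \<forall>x. (x \<in> {..<l} \<longrightarrow> f x \<in> {..m}) \<and> (x \<notin> {..<l} \<longrightarrow> f x = 0)}"
    by (auto simp: colour_assignments_def)
  show "finite {f. \<forall>x. (x \<in> {..<l} \<longrightarrow> f x \<in> {..m}) \<and> (x \<notin> {..<l} \<longrightarrow> f x = 0)}"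
    by (rule finite_set_of_finite_funs) auto
qed

lemma card_colour_assignments: "card (colour_assignments l m) = m ^ l"
proof -
  have "bij_betw (\<lambda>f. restrict f {..<l}) (colour_assignments l m) (PiE {..<l} (\<lambda>_. {1..m}))"
  proof (rule bij_betw_byWitness[where f'="\<lambda>g j. if j < l then g j else 0"])
    show "\<forall>f\<in>colour_assignments l m. (\<lambda>j. if j < l then restrict f {..<l} j else 0) = f"
      by (auto simp: fun_eq_iff colour_assignments_def)
    show "\<forall>g\<in>PiE {..<l} (\<lambda>_. {1..m}). restrict (\<lambda>j. if j < l then g j else 0) {..<l} = g"
      by (auto simp: fun_eq_iff PiE_def extensional_def restrict_def)
    show "(\<lambda>f. restrict f {..<l}) ` colour_assignments l m \<subseteq> PiE {..<l} (\<lambda>_. {1..m})"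
    proof
      fix g assume "g \<in> (\<lambda>f. restrict f {..<l}) ` colour_assignments l m"
      then obtain f where f: "f \<in> colour_assignments l m" "g = restrict f {..<l}" by blast
      show "g \<in> PiE {..<l} (\<lambda>_. {1..m})"
        unfolding f(2) restrict_PiE_iff using f(1) by (auto simp: colour_assignments_def)
    qed
    show "(\<lambda>g j. if j < l then g j else 0) ` PiE {..<l} (\<lambda>_. {1..m}) \<subseteq> colour_assignments l m"
      by (auto simp: PiE_def Pi_def colour_assignments_def)
  qed
  then have "card (colour_assignments l m) = card (PiE {..<l} (\<lambda>_. {1..m}))" by (rule bij_betw_same_card)
  also have "\<dots> = m ^ l" by (simp add: card_PiE)
  finally show ?thesis .
qed

lemma weighted_fibre_sizes_bounded:
  assumes cs: "sum_list c = N" and f: "f \<in> colour_assignments (length c) m"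
  shows "(\<lambda>i. \<Sum>j\<in>{j. j < length c \<and> f j = i}. c!j) \<in> bounded_types N m"
proof -
  have "(\<Sum>j\<in>{j. j < length c \<and> f j = i}. c!j) \<le> N" for i
  proof -
    have "(\<Sum>j\<in>{j. j < length c \<and> f j = i}. c!j) \<le> (\<Sum>j\<in>{..<length c}. c!j)"
      by (rule sum_mono2) auto
    also have "\<dots> = N" using cs by (simp add: sum_list_sum_nth atLeast0LessThan)
    finally show ?thesis .
  qed
  moreover have "{j. j < length c \<and> f j = i} = {}" if "i \<notin> {..m}" for i
    using f that by (force simp: colour_assignments_def)
  ultimately show ?thesis by (auto simp: bounded_types_def)
qed

lemma power_sum_fns_eq_fibre:
  assumes c0: "0 \<notin> set c" and \<alpha>: "\<alpha> \<in> bounded_types N m"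
  shows "power_sum_fns c \<alpha>
    = {f\<in>colour_assignments (length c) m. (\<lambda>i. \<Sum>j\<in>{j. j < length c \<and> f j = i}. c!j) = \<alpha>}"
proof (rule set_eqI, rule iffI)
  fix f assume f: "f \<in> power_sum_fns c \<alpha>"
  have "f j \<le> m" if j: "j < length c" for j
  proof -
    have "f j \<notin> {..m} \<longrightarrow> \<alpha> (f j) = 0" using \<alpha> by (simp add: bounded_types_def)
    then show ?thesis using power_sum_fns_pos[OF f j c0] by auto
  qed
  then show "f \<in> {f\<in>colour_assignments (length c) m. (\<lambda>i. \<Sum>j\<in>{j. j < length c \<and> f j = i}. c!j) = \<alpha>}"
    using power_sum_fnsD[OF f] by (auto simp: colour_assignments_def)
qed (auto simp: power_sum_fns_def colour_assignments_def)

lemma sum_power_sum_bounded_types: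
  assumes c0: "0 \<notin> set c" and cs: "sum_list c = N"
  shows "(\<Sum>\<alpha>\<in>bounded_types N m. power_sum c \<alpha>) = m ^ length c"
proof -
  let ?sz = "\<lambda>f i. \<Sum>j\<in>{j. j < length c \<and> f j = i}. c!j"
  have "m ^ length c = card (colour_assignments (length c) m)" by (simp add: card_colour_assignments)
  also have "\<dots> = (\<Sum>\<alpha>\<in>bounded_types N m. card {f\<in>colour_assignments (length c) m. ?sz f = \<alpha>})"
    by (rule card_eq_sum_card_fibres[OF finite_colour_assignments finite_bounded_types])
      (use weighted_fibre_sizes_bounded[OF cs] in blast)
  also have "\<dots> = (\<Sum>\<alpha>\<in>bounded_types N m. power_sum c \<alpha>)"
    unfolding power_sum_def using power_sum_fns_eq_fibre[OF c0] by (intro sum.cong) simp_all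
  finally show ?thesis by simp
qed

lemma sum_power_sum_block_type:
  assumes l: "l \<in> partitions n" and SE: "S \<subseteq> path_E l"
  shows "(\<Sum>\<alpha>\<in>bounded_types n m. power_sum (block_type n S) \<alpha>) = m ^ (n - card S)"
  using sum_power_sum_bounded_types[OF partitionsD(1,2)[OF path_subgraph_type(1)[OF l SE]]]
    path_subgraph_type(2)[OF l SE] by simp

lemma sum_path_csf_bounded_types:
  assumes l: "l \<in> partitions n"
  shows "(\<Sum>\<alpha>\<in>bounded_types n m. path_csf l \<alpha>) = of_nat m ^ length l * (of_nat m - 1) ^ (n - length l)"
proof -
  let ?E = "path_E l"
  have exps: "n - card S = length l + (card ?E - card S)" if "S \<subseteq> ?E" for S
    using card_mono[OF finite_path_E that] path_E_type(2)[OF l] length_partition_le[OF l] by linarith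
  have "(\<Sum>\<alpha>\<in>bounded_types n m. path_csf l \<alpha>)
      = (\<Sum>S\<in>Pow ?E. (-1)^card S * of_nat (\<Sum>\<alpha>\<in>bounded_types n m. power_sum (block_type n S) \<alpha>))"
    by (simp add: path_csf_expansion[OF l] sum_distrib_left sum.swap[of _ "bounded_types n m"])
  also have "\<dots> = (\<Sum>S\<in>Pow ?E. of_nat m ^ length l * ((-1)^card S * of_nat m ^ (card ?E - card S)))"
    by (rule sum.cong[OF refl]) (simp add: sum_power_sum_block_type[OF l] exps power_add)
  also have "\<dots> = of_nat m ^ length l * (of_nat m - 1) ^ card ?E"
    by (simp add: sum_distrib_left[symmetric] sum_Pow_binomial[OF finite_path_E])
  finally show ?thesis using path_E_type(2)[OF l] by simp
qed

lemma simple_graph_delete: "simple_graph V E \<Longrightarrow> simple_graph V (E - {e})"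
  by (simp add: simple_graph_def)

lemma simple_graph_contract:
  assumes G: "simple_graph V E" and e: "{u, v} \<in> E"
  shows "simple_graph (V - {v}) (contract_edges E u v)"
proof -
  have fin: "finite V" and Ee: "\<And>e'. e' \<in> E \<Longrightarrow> e' \<subseteq> V \<and> card e' = 2" using G by (auto simp: simple_graph_def)
  have uv: "u \<noteq> v" "u \<in> V" "v \<in> V" using Ee[OF e] by (auto simp: card_2_iff)
  let ?s = "\<lambda>x. if x = v then u else x"
  have "f \<subseteq> V - {v} \<and> card f = 2" if f: "f \<in> contract_edges E u v" for f
  proof -
    obtain e' where e': "f = ?s ` e'" "e' \<in> E" "card (?s ` e') = 2"
      using f unfolding contract_edges_def by blast
    have "?s ` e' \<subseteq> V - {v}" using Ee[OF e'(2)] uv by auto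
    then show ?thesis using e' by simp
  qed
  then show ?thesis using fin by (simp add: simple_graph_def)
qed

lemma proper_colourings_delete_edge:
  assumes e: "{u, v} \<in> E" and uv: "u \<noteq> v"
  shows "\<kappa> \<in> proper_colourings V E \<longleftrightarrow> \<kappa> \<in> proper_colourings V (E - {{u, v}}) \<and> \<kappa> u \<noteq> \<kappa> v"
proof
  assume "\<kappa> \<in> proper_colourings V E"
  moreover have "\<kappa> u \<noteq> \<kappa> v" using calculation e uv unfolding proper_colourings_def by blast
  ultimately show "\<kappa> \<in> proper_colourings V (E - {{u, v}}) \<and> \<kappa> u \<noteq> \<kappa> v"
    unfolding proper_colourings_def by blast
next
  assume k: "\<kappa> \<in> proper_colourings V (E - {{u, v}}) \<and> \<kappa> u \<noteq> \<kappa> v"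
  have "\<kappa> x \<noteq> \<kappa> y" if "e' \<in> E" "x \<in> e'" "y \<in> e'" "x \<noteq> y" for e' x y
  proof (cases "e' = {u, v}")
    case True
    then have "(x = u \<and> y = v) \<or> (x = v \<and> y = u)" using that by auto
    then show ?thesis using k by auto
  next
    case False
    then show ?thesis using k that unfolding proper_colourings_def by blast
  qed
  then show "\<kappa> \<in> proper_colourings V E" using k unfolding proper_colourings_def by blast
qed

lemma contracted_colouring_proper:
  assumes G: "simple_graph V E" and e: "{u, v} \<in> E"
    and \<kappa>: "\<kappa> \<in> proper_colourings V (E - {{u, v}})" and uv_same: "\<kappa> u = \<kappa> v"
  shows "\<kappa>(v := 0) \<in> proper_colourings (V - {v}) (contract_edges E u v)"
proof -
  define s where "s x = (if x = v then u else x)" for x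
  have uv: "u \<noteq> v" using G e by (auto simp: simple_graph_def card_2_iff)
  have \<kappa>s: "(\<kappa>(v := 0)) (s a) = \<kappa> a" for a using uv uv_same by (simp add: s_def)
  have "(\<kappa>(v := 0)) x \<noteq> (\<kappa>(v := 0)) y"
    if f: "f \<in> contract_edges E u v" and xy: "x \<in> f" "y \<in> f" "x \<noteq> y" for f x y
  proof -
    obtain e' where e': "f = s ` e'" "e' \<in> E" "card (s ` e') = 2"
      using f unfolding contract_edges_def s_def by blast
    obtain a b where ab: "a \<in> e'" "b \<in> e'" "x = s a" "y = s b" using e'(1) xy by blast
    have "a \<noteq> b" using ab xy(3) by blast
    have "e' \<noteq> {u, v}"
    proof
      assume "e' = {u, v}"
      then have "s ` e' = {u}" by (auto simp: s_def)
      then show False using e'(3) by simp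
    qed
    then have "e' \<in> E - {{u, v}}" using e'(2) by simp
    then have "\<kappa> a \<noteq> \<kappa> b" using \<kappa> ab(1,2) \<open>a \<noteq> b\<close> unfolding proper_colourings_def by blast
    then show ?thesis unfolding ab \<kappa>s .
  qed
  moreover have "\<forall>x\<in>V - {v}. 1 \<le> (\<kappa>(v := 0)) x" "\<forall>x. x \<notin> V - {v} \<longrightarrow> (\<kappa>(v := 0)) x = 0"
    using \<kappa> by (simp_all add: proper_colourings_def)
  ultimately show ?thesis unfolding proper_colourings_def by blast
qed

lemma expanded_colouring_proper:
  assumes G: "simple_graph V E" and e: "{u, v} \<in> E"
    and \<kappa>: "\<kappa> \<in> proper_colourings (V - {v}) (contract_edges E u v)"
  shows "\<kappa>(v := \<kappa> u) \<in> proper_colourings V (E - {{u, v}})"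
proof -
  define s where "s x = (if x = v then u else x)" for x
  have Ee: "\<And>e'. e' \<in> E \<Longrightarrow> e' \<subseteq> V \<and> card e' = 2" using G by (auto simp: simple_graph_def)
  have uv: "u \<noteq> v" "u \<in> V" "v \<in> V" using Ee[OF e] by (auto simp: card_2_iff)
  have \<kappa>s: "(\<kappa>(v := \<kappa> u)) a = \<kappa> (s a)" for a by (simp add: s_def)
  have contract_edges_eq: "contract_edges E u v = {s ` e'' | e''. e'' \<in> E \<and> card (s ` e'') = 2}"
    by (simp add: contract_edges_def s_def)
  have "(\<kappa>(v := \<kappa> u)) x \<noteq> (\<kappa>(v := \<kappa> u)) y"
    if e': "e' \<in> E - {{u, v}}" and xy: "x \<in> e'" "y \<in> e'" "x \<noteq> y" for e' x y
  proof -
    have "card e' = 2" using Ee e' by blast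
    then obtain p q where "e' = {p, q}" "p \<noteq> q" unfolding card_2_iff by blast
    then have e'_eq: "e' = {x, y}" using xy by auto
    have sxy: "s x \<noteq> s y"
    proof
      assume "s x = s y"
      then have "(x = v \<and> y = u) \<or> (x = u \<and> y = v)" using xy(3) by (auto simp: s_def split: if_splits)
      then show False using e' e'_eq by auto
    qed
    have img: "s ` e' = {s x, s y}" using e'_eq by simp
    then have "card (s ` e') = 2" using sxy by simp
    then have f: "s ` e' \<in> contract_edges E u v" using e' unfolding contract_edges_eq by blast
    have "\<forall>f\<in>contract_edges E u v. \<forall>a\<in>f. \<forall>b\<in>f. a \<noteq> b \<longrightarrow> \<kappa> a \<noteq> \<kappa> b"
      using \<kappa> by (simp add: proper_colourings_def)
    then have "\<kappa> (s x) \<noteq> \<kappa> (s y)" using f img sxy by simp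
    then show ?thesis unfolding \<kappa>s .
  qed
  moreover have "\<forall>x\<in>V. 1 \<le> (\<kappa>(v := \<kappa> u)) x" "\<forall>x. x \<notin> V \<longrightarrow> (\<kappa>(v := \<kappa> u)) x = 0"
    using \<kappa> uv by (auto simp: proper_colourings_def)
  ultimately show ?thesis unfolding proper_colourings_def by blast
qed

lemma chromatic_count_deletion_contraction:
  assumes G: "simple_graph V E" and e: "{u, v} \<in> E"
  shows "chromatic_count V (E - {{u, v}}) m = chromatic_count V E m + chromatic_count (V - {v}) (contract_edges E u v) m"
proof -
  have fin: "finite V" using G by (simp add: simple_graph_def)
  have uv: "u \<noteq> v" "u \<in> V" "v \<in> V" using G e by (auto simp: simple_graph_def card_2_iff)
  let ?T1 = "{\<kappa>\<in>proper_colourings V (E - {{u, v}}). \<forall>x. \<kappa> x \<le> m}"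
  let ?T3 = "{\<kappa>\<in>proper_colourings (V - {v}) (contract_edges E u v). \<forall>x. \<kappa> x \<le> m}"
  have "finite ?T1" by (rule finite_bounded_colourings[OF fin])
  moreover have "?T1 = {\<kappa>\<in>?T1. \<kappa> u \<noteq> \<kappa> v} \<union> {\<kappa>\<in>?T1. \<kappa> u = \<kappa> v}" by blast
  moreover have "{\<kappa>\<in>?T1. \<kappa> u \<noteq> \<kappa> v} \<inter> {\<kappa>\<in>?T1. \<kappa> u = \<kappa> v} = {}" by blast
  ultimately have split: "card ?T1 = card {\<kappa>\<in>?T1. \<kappa> u \<noteq> \<kappa> v} + card {\<kappa>\<in>?T1. \<kappa> u = \<kappa> v}"
    by (metis (no_types, lifting) card_Un_disjoint finite_Un)
  have "{\<kappa>\<in>proper_colourings V E. \<forall>x. \<kappa> x \<le> m} = {\<kappa>\<in>?T1. \<kappa> u \<noteq> \<kappa> v}"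
    using proper_colourings_delete_edge[OF e uv(1)] by blast
  moreover have "bij_betw (\<lambda>\<kappa>. \<kappa>(v := 0)) {\<kappa>\<in>?T1. \<kappa> u = \<kappa> v} ?T3"
  proof (rule bij_betw_byWitness[where f'="\<lambda>\<kappa>. \<kappa>(v := \<kappa> u)"])
    show "\<forall>\<kappa>\<in>{\<kappa>\<in>?T1. \<kappa> u = \<kappa> v}. (\<kappa>(v := 0))(v := (\<kappa>(v := 0)) u) = \<kappa>"
      using uv by (auto simp: fun_eq_iff)
    show "\<forall>\<kappa>\<in>?T3. (\<kappa>(v := \<kappa> u))(v := 0) = \<kappa>"
      by (auto simp: fun_eq_iff proper_colourings_def)
    show "(\<lambda>\<kappa>. \<kappa>(v := 0)) ` {\<kappa>\<in>?T1. \<kappa> u = \<kappa> v} \<subseteq> ?T3"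
    proof (rule image_subsetI)
      fix \<kappa> assume "\<kappa> \<in> {\<kappa>\<in>?T1. \<kappa> u = \<kappa> v}"
      then show "\<kappa>(v := 0) \<in> ?T3" using contracted_colouring_proper[OF G e] by simp
    qed
    show "(\<lambda>\<kappa>. \<kappa>(v := \<kappa> u)) ` ?T3 \<subseteq> {\<kappa>\<in>?T1. \<kappa> u = \<kappa> v}"
    proof (rule image_subsetI)
      fix \<kappa> assume "\<kappa> \<in> ?T3"
      then show "\<kappa>(v := \<kappa> u) \<in> {\<kappa>\<in>?T1. \<kappa> u = \<kappa> v}"
        using expanded_colouring_proper[OF G e] uv(1) by simp
    qed
  qed
  then have "card {\<kappa>\<in>?T1. \<kappa> u = \<kappa> v} = card ?T3" by (rule bij_betw_same_card)
  ultimately show ?thesis unfolding chromatic_count_def using split by simp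
qed


text \<open>Each path forest \<open>P\<^sub>\<lambda>\<close> has chromatic polynomial \<open>x\<^bsup>\<ell>(\<lambda>)\<^esup> (x - 1)\<^bsup>n - \<ell>(\<lambda>)\<^esup>\<close>.\<close>

definition chromatic_poly :: "'a set \<Rightarrow> 'a set set \<Rightarrow> rat poly" where
  "chromatic_poly V E = (\<Sum>l\<in>partitions (card V). smult (path_coeffs V E l) ([:0,1:]^length l * [:-1,1:]^(card V - length l)))"

lemma poly_chromatic_poly:
  assumes G: "simple_graph V E"
  shows "poly (chromatic_poly V E) (of_nat m) = of_nat (chromatic_count V E m)"
proof -
  let ?P = "partitions (card V)" and ?a = "path_coeffs V E"
  have fin: "finite V" using G by (simp add: simple_graph_def)
  have exp: "\<And>\<alpha>. csf V E \<alpha> = (\<Sum>p\<in>?P. ?a p * path_csf p \<alpha>)" using path_coeffs_expansion[OF G] by blast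
  have "of_nat (chromatic_count V E m) = (\<Sum>\<alpha>\<in>bounded_types (card V) m. csf V E \<alpha>)" by (rule chromatic_count_sum_csf[OF fin])
  also have "\<dots> = (\<Sum>\<alpha>\<in>bounded_types (card V) m. \<Sum>p\<in>?P. ?a p * path_csf p \<alpha>)" by (simp add: exp)
  also have "\<dots> = (\<Sum>p\<in>?P. \<Sum>\<alpha>\<in>bounded_types (card V) m. ?a p * path_csf p \<alpha>)" by (rule sum.swap)
  also have "\<dots> = (\<Sum>p\<in>?P. ?a p * (of_nat m ^ length p * (of_nat m - 1) ^ (card V - length p)))"
    by (rule sum.cong[OF refl]) (simp add: sum_distrib_left[symmetric] sum_path_csf_bounded_types)
  also have "\<dots> = poly (chromatic_poly V E) (of_nat m)"
    by (simp add: chromatic_poly_def poly_sum)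
  finally show ?thesis by simp
qed

lemma poly_eqI_infinite:
  fixes p q :: "'a::idom poly"
  assumes S: "infinite S" and eq: "\<And>x. x \<in> S \<Longrightarrow> poly p x = poly q x"
  shows "p = q"
proof (rule ccontr)
  assume "p \<noteq> q"
  then have "finite {x. poly (p - q) x = 0}" by (intro poly_roots_finite) simp
  moreover have "S \<subseteq> {x. poly (p - q) x = 0}" using eq by auto
  ultimately show False using S finite_subset by blast
qed

lemma chromatic_poly_deletion_contraction:
  assumes G: "simple_graph V E" and e: "{u, v} \<in> E"
  shows "chromatic_poly V E
    = chromatic_poly V (E - {{u, v}}) - chromatic_poly (V - {v}) (contract_edges E u v)"
proof (rule poly_eqI_infinite)
  show "infinite (range (of_nat :: nat \<Rightarrow> rat))" by (simp add: finite_image_iff inj_on_def)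
next
  fix y assume "y \<in> range (of_nat :: nat \<Rightarrow> rat)"
  then obtain m where "y = of_nat m" by blast
  then show "poly (chromatic_poly V E) y
      = poly (chromatic_poly V (E - {{u, v}}) - chromatic_poly (V - {v}) (contract_edges E u v)) y"
    by (simp add: poly_chromatic_poly G simple_graph_delete simple_graph_contract[OF G e]
        chromatic_count_deletion_contraction[OF G e])
qed

text \<open>The substitution behind \<open>\<tau>\<^sub>G(x) = (x - 1)\<^sup>n \<chi>\<^sub>G(x / (x - 1))\<close>.\<close>

lemma substitution_monomial:
  fixes x :: "'a::field"
  assumes x: "x \<noteq> 1" and kn: "k \<le> n"
  shows "(x - 1)^n * ((x / (x - 1))^k * (x / (x - 1) - 1)^(n - k)) = x^k"
proof -
  have split: "(x - 1)^n = (x - 1)^k * (x - 1)^(n - k)" using kn by (simp add: power_add[symmetric])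
  have m1: "(x - 1) * (x / (x - 1)) = x" and m2: "(x - 1) * (x / (x - 1) - 1) = 1"
    using x by (simp_all add: field_simps)
  have "(x - 1)^n * ((x / (x - 1))^k * (x / (x - 1) - 1)^(n - k))
      = ((x - 1) * (x / (x - 1)))^k * ((x - 1) * (x / (x - 1) - 1))^(n - k)"
    unfolding split power_mult_distrib by (simp only: mult_ac)
  also have "\<dots> = x^k" unfolding m1 m2 by simp
  finally show ?thesis .
qed

lemma poly_tree_poly:
  assumes "x \<noteq> 1"
  shows "poly (tree_poly V E) x = (x - 1)^card V * poly (chromatic_poly V E) (x / (x - 1))"
proof -
  have "(x - 1)^card V * poly (chromatic_poly V E) (x / (x - 1))
      = (\<Sum>l\<in>partitions (card V). path_coeffs V E l *
          ((x - 1)^card V * ((x / (x - 1))^length l * (x / (x - 1) - 1)^(card V - length l))))"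
    by (simp add: chromatic_poly_def poly_sum sum_distrib_left algebra_simps)
  also have "\<dots> = (\<Sum>l\<in>partitions (card V). path_coeffs V E l * x ^ length l)"
    using assms length_partition_le by (simp add: substitution_monomial)
  also have "\<dots> = poly (tree_poly V E) x"
    by (simp add: tree_poly_def poly_sum poly_monom)
  finally show ?thesis by simp
qed

theorem theorem4p2:
  fixes V :: "'a set" and E :: "'a set set" and u v :: 'a
  assumes "simple_graph V E"
    and "{u, v} \<in> E"
  shows "tree_poly V E =
           tree_poly V (E - {{u, v}}) - [:-1, 1:] * tree_poly (V - {v}) (contract_edges E u v)"
proof (rule poly_eqI_infinite)
  have "{x::rat. x \<noteq> 1} = UNIV - {1}" by auto
  then show "infinite {x::rat. x \<noteq> 1}" using infinite_UNIV_char_0 by simp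
next
  fix x :: rat assume "x \<in> {x. x \<noteq> 1}"
  then have x: "x \<noteq> 1" by simp
  let ?y = "x / (x - 1)" and ?V' = "V - {v}" and ?E' = "contract_edges E u v"
  have "finite V" "v \<in> V" using assms by (auto simp: simple_graph_def)
  then have "card V = Suc (card ?V')" by (rule card_Suc_Diff1[symmetric])
  then have n: "(x - 1)^card V = (x - 1) * (x - 1)^card ?V'" by simp
  have lin: "poly [:-1, 1:] x = x - 1" by simp
  have "poly (tree_poly V E) x = (x - 1)^card V * poly (chromatic_poly V E) ?y"
    by (rule poly_tree_poly[OF x])
  also have "\<dots> = (x - 1)^card V * poly (chromatic_poly V (E - {{u, v}})) ?y
      - (x - 1) * ((x - 1)^card ?V' * poly (chromatic_poly ?V' ?E') ?y)"
    unfolding chromatic_poly_deletion_contraction[OF assms] poly_diff n by (simp only: algebra_simps)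
  also have "\<dots> = poly (tree_poly V (E - {{u, v}})) x - poly [:-1, 1:] x * poly (tree_poly ?V' ?E') x"
    by (simp only: poly_tree_poly[OF x] lin)
  finally show "poly (tree_poly V E) x = poly (tree_poly V (E - {{u, v}}) - [:-1, 1:] * tree_poly ?V' ?E') x"
    by (simp only: poly_diff poly_mult)
qed

end
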